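(* Let $0<\alpha<1$, $l,T>0$, integers $N,M\ge2$, $h=l/N$, $x_i=ih$, $\tau=T/M$, $t_j=j\tau$. Let $k(t)\ge c_1>0$ and $q(t)\ge0$ be given functions of $t$ only, $a^{j+1}=k(t_{j+1})$, $d^{j+1}=q(t_{j+1})$, and let $\varphi_i^{j+1}$ be given grid data. Consider the compact difference scheme $$\Delta_{0t_{j+1}}^{\alpha}\mathcal{H}_hy_i=a^{j+1}y_{\bar xx,i}^{j+1}-d^{j+1}\mathcal{H}_hy_i^{j+1}+\mathcal{H}_h\varphi_i^{j+1},\quad i=1,\dots,N-1,\ j=1,\dots,M-1,$$ $$y_0^j=y_N^j=0\ (j=0,\dots,M),\qquad y_i^0=u_0(x_i)\ (i=0,\dots,N),$$ with $y^1$ given. Then the scheme is unconditionally stable, and its solution satisfies $$\sum_{j=1}^{M-1}\left(\|\mathcal{H}_hy^{j+1}\|_0^2+\|y_{\bar x}^{j+1}]|_0^2\right)\tau\le M_2\left(\|\mathcal{H}_hy^1\|_0^2+\|\mathcal{H}_hy^0\|_0^2+\sum_{j=1}^{M-1}\|\mathcal{H}_h\varphi^{j+1}\|_0^2\tau\right),$$ where $M_2>0$ is a number independent of $h$ and $\tau$.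
   Context: Notation: $y_i^j$ is the value at $(x_i,t_j)$; $y_{\bar x,i}=(y_i-y_{i-1})/h$; $y_{\bar xx,i}=(y_{i+1}-2y_i+y_{i-1})/h^2$; $\mathcal{H}_hv_i=v_i+\frac{h^2}{12}v_{\bar xx,i}$ for $i=1,\dots,N-1$; $\|y\|_0^2=\sum_{i=1}^{N-1}y_i^2h$; $\|y]|_0^2=\sum_{i=1}^{N}y_i^2h$. The L2 operator acting on a grid function $w$ is $\Delta_{0t_{j+1}}^{\alpha}w_i=\frac{\tau^{-\alpha}}{\Gamma(2-\alpha)}\sum_{s=0}^{j}c_{j-s}^{(\alpha)}(w_i^{s+1}-w_i^s)$, with $a_l^{(\alpha)}=(l+1)^{1-\alpha}-l^{1-\alpha}$, $b_l^{(\alpha)}=\frac{1}{2-\alpha}[(l+1)^{2-\alpha}-l^{2-\alpha}]-\frac12[(l+1)^{1-\alpha}+l^{1-\alpha}]$ and the $j$-dependent coefficients: for $j=1$: $c_0^{(\alpha)}=a_0^{(\alpha)}+b_0^{(\alpha)}+b_1^{(\alpha)}$, $c_1^{(\alpha)}=a_1^{(\alpha)}-b_1^{(\alpha)}-b_0^{(\alpha)}$; for $j=2$: $c_0^{(\alpha)}=a_0^{(\alpha)}+b_0^{(\alpha)}$, $c_1^{(\alpha)}=a_1^{(\alpha)}+b_1^{(\alpha)}+b_2^{(\alpha)}-b_0^{(\alpha)}$, $c_2^{(\alpha)}=a_2^{(\alpha)}-b_2^{(\alpha)}-b_1^{(\alpha)}$; for $j\ge3$: $c_0^{(\alpha)}=a_0^{(\alpha)}+b_0^{(\alpha)}$,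 $c_s^{(\alpha)}=a_s^{(\alpha)}+b_s^{(\alpha)}-b_{s-1}^{(\alpha)}$ ($1\le s\le j-2$), $c_{j-1}^{(\alpha)}=a_{j-1}^{(\alpha)}+b_{j-1}^{(\alpha)}+b_j^{(\alpha)}-b_{j-2}^{(\alpha)}$, $c_j^{(\alpha)}=a_j^{(\alpha)}-b_j^{(\alpha)}-b_{j-1}^{(\alpha)}$. *)

theory Defs
  imports "HOL-Analysis.Analysis"
begin

text \<open>Grid functions are y :: nat \<Rightarrow> nat \<Rightarrow> real, with y i j the value at (x_i, t_j).\<close>

definition l2a :: "real \<Rightarrow> nat \<Rightarrow> real" where
  "l2a \<alpha> l = (real l + 1) powr (1 - \<alpha>) - real l powr (1 - \<alpha>)"

definition l2b :: "real \<Rightarrow> nat \<Rightarrow> real" where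
  "l2b \<alpha> l = 1 / (2 - \<alpha>) * ((real l + 1) powr (2 - \<alpha>) - real l powr (2 - \<alpha>))
              - 1 / 2 * ((real l + 1) powr (1 - \<alpha>) + real l powr (1 - \<alpha>))"

definition l2c :: "real \<Rightarrow> nat \<Rightarrow> nat \<Rightarrow> real" where
  "l2c \<alpha> j s =
    (if j = 1 then
       (if s = 0 then l2a \<alpha> 0 + l2b \<alpha> 0 + l2b \<alpha> 1
        else l2a \<alpha> 1 - l2b \<alpha> 1 - l2b \<alpha> 0)
     else if j = 2 then
       (if s = 0 then l2a \<alpha> 0 + l2b \<alpha> 0
        else if s = 1 then l2a \<alpha> 1 + l2b \<alpha> 1 + l2b \<alpha> 2 - l2b \<alpha> 0
        else l2a \<alpha> 2 - l2b \<alpha> 2 - l2b \<alpha> 1)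
     else
       (if s = 0 then l2a \<alpha> 0 + l2b \<alpha> 0
        else if s \<le> j - 2 then l2a \<alpha> s + l2b \<alpha> s - l2b \<alpha> (s - 1)
        else if s = j - 1 then l2a \<alpha> (j-1) + l2b \<alpha> (j-1) + l2b \<alpha> j - l2b \<alpha> (j-2)
        else l2a \<alpha> j - l2b \<alpha> j - l2b \<alpha> (j-1)))"

text \<open>L2 approximation of the Caputo derivative at t_{j+1}, applied to grid function w at node i.\<close>
definition L2op :: "real \<Rightarrow> real \<Rightarrow> (nat \<Rightarrow> nat \<Rightarrow> real) \<Rightarrow> nat \<Rightarrow> nat \<Rightarrow> real" where
  "L2op \<alpha> \<tau> w i j = \<tau> powr (- \<alpha>) / Gamma (2 - \<alpha>) *
      (\<Sum>s = 0..j. l2c \<alpha> j (j - s) * (w i (s + 1) - w i s))"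

definition dxx :: "real \<Rightarrow> (nat \<Rightarrow> nat \<Rightarrow> real) \<Rightarrow> nat \<Rightarrow> nat \<Rightarrow> real" where
  "dxx h y i j = (y (i + 1) j - 2 * y i j + y (i - 1) j) / h^2"

definition dxb :: "real \<Rightarrow> (nat \<Rightarrow> nat \<Rightarrow> real) \<Rightarrow> nat \<Rightarrow> nat \<Rightarrow> real" where
  "dxb h y i j = (y i j - y (i - 1) j) / h"

definition Hh :: "real \<Rightarrow> (nat \<Rightarrow> nat \<Rightarrow> real) \<Rightarrow> nat \<Rightarrow> nat \<Rightarrow> real" where
  "Hh h v i j = v i j + h^2 / 12 * dxx h v i j"

definition nrm0sq :: "real \<Rightarrow> nat \<Rightarrow> (nat \<Rightarrow> nat \<Rightarrow> real) \<Rightarrow> nat \<Rightarrow> real" where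
  "nrm0sq h N v j = (\<Sum>i = 1..N - 1. (v i j)^2 * h)"

definition nrm0bsq :: "real \<Rightarrow> nat \<Rightarrow> (nat \<Rightarrow> nat \<Rightarrow> real) \<Rightarrow> nat \<Rightarrow> real" where
  "nrm0bsq h N v j = (\<Sum>i = 1..N. (v i j)^2 * h)"

end

theory Submission
  imports Defs
begin

text \<open>
  Energy method. Multiply the scheme by H_h y^{j+1} h and sum over the nodes. In space,
  summation by parts bounds the diffusion term by -(2/3) c1 ||y_x]|^2, and the discrete
  Poincare inequality ||H_h y||^2 <= l^2 ||y_x]|^2 lets it absorb the source term after
  Young's inequality. In time everything rests on a discrete positivity property of the L2
  formula: for every real sequence v,
    sum_{j=1}^{M-1} (sum_{s=0}^{j} c_{j-s} (v^{s+1} - v^s)) v^{j+1} >= -3 M^{1-alpha} ((v^0)^2 + (v^1)^2).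
  Write 2 (v^{s+1} - v^s) v^{j+1} = ((v^{s+1})^2 - (v^s)^2) + ((v^{j+1} - v^s)^2 - (v^{j+1} - v^{s+1})^2).
  The first part telescopes against the partial sums of the coefficients, which are
  M^{1-alpha} + O(1). After summation by parts in s, the second part is nonnegative up to
  boundary terms, because the coefficients decrease except at the first two steps, where a
  quantitative gap compensates. All these coefficient properties come from Taylor expansions
  of x^{1-alpha}. Finally tau * tau^{-alpha} * M^{1-alpha} = T^{1-alpha}, so the constant depends
  neither on h nor on tau.
\<close>

section \<open>Derivatives of powers and elementary inequalities\<close>

definition powr_deriv :: "real \<Rightarrow> nat \<Rightarrow> real \<Rightarrow> real" where
  "powr_deriv e m x = (\<Prod>i<m. e - real i) * x powr (e - real m)"

lemma powr_deriv_0 [simp]: "powr_deriv e 0 x = x powr e"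
  and powr_deriv_2: "powr_deriv e 2 x = e * (e - 1) * x powr (e - 2)"
  and powr_deriv_3: "powr_deriv e 3 x = e * (e - 1) * (e - 2) * x powr (e - 3)"
  by (simp_all add: powr_deriv_def eval_nat_numeral)

lemma has_real_derivative_powr_deriv:
  assumes "0 < x"
  shows "(powr_deriv e m has_real_derivative powr_deriv e (Suc m) x) (at x)"
proof -
  have "((\<lambda>x. (\<Prod>i<m. e - real i) * x powr (e - real m)) has_real_derivative
      (\<Prod>i<m. e - real i) * ((e - real m) * x powr (e - real m - 1))) (at x)"
    using assms by (intro DERIV_cmult has_real_derivative_powr)
  then show ?thesis
    by (simp add: powr_deriv_def[abs_def] algebra_simps)
qed

lemma powr_deriv_Suc_shift: "powr_deriv (1 + e) (Suc m) x = (1 + e) * powr_deriv e m x"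
proof -
  have "(\<Prod>i<Suc m. 1 + e - real i) = (1 + e) * (\<Prod>i<m. e - real i)"
    by (subst prod.lessThan_Suc_shift) (simp add: algebra_simps)
  then show ?thesis by (simp add: powr_deriv_def)
qed

lemma powr_Taylor_up:
  assumes "0 < c" "c < b" "0 < n"
  obtains t where "c < t" "t < b"
    "b powr e = (\<Sum>m<n. powr_deriv e m c / fact m * (b - c)^m) + powr_deriv e n t / fact n * (b - c)^n"
  using Taylor_up[where a = c and b = b and c = c and diff = "powr_deriv e" and n = n] assms
  by (fastforce intro!: has_real_derivative_powr_deriv)

lemma powr_Taylor_down:
  assumes "0 < a" "a < c" "0 < n"
  obtains t where "a < t" "t < c"
    "a powr e = (\<Sum>m<n. powr_deriv e m c / fact m * (a - c)^m) + powr_deriv e n t / fact n * (a - c)^n"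
  using Taylor_down[where a = a and b = c and c = c and diff = "powr_deriv e" and n = n] assms
  by (fastforce intro!: has_real_derivative_powr_deriv)

lemma powr_deriv_3_pos:
  assumes "0 < e" "e < 1" "0 < x"
  shows "0 < powr_deriv e 3 x"
  using assms by (simp add: powr_deriv_3 mult_pos_neg mult_neg_neg)

lemma powr_deriv_3_antimono:
  assumes "0 < e" "e < 1" "0 < x" "x \<le> y"
  shows "powr_deriv e 3 y \<le> powr_deriv e 3 x"
proof -
  have "0 < e * (e - 1) * (e - 2)"
    using assms by (simp add: mult_pos_neg mult_neg_neg)
  moreover have "y powr (e - 3) \<le> x powr (e - 3)"
    using assms by (intro powr_mono2') auto
  ultimately show ?thesis
    by (simp add: powr_deriv_3 mult_left_mono)
qed

lemma powr_neg_le_scaled: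
  fixes a b k p q :: real
  assumes "0 < b" "b \<le> k * a" "1 \<le> k" "0 \<le> p" "p \<le> q"
  shows "a powr (-p) \<le> k powr q * b powr (-p)"
proof -
  have "a powr (-p) \<le> (b / k) powr (-p)"
    using assms by (intro powr_mono2') (auto simp: divide_le_eq mult.commute)
  also have "\<dots> = b powr (-p) / k powr (-p)"
    using assms by (simp add: powr_divide)
  also have "\<dots> = k powr p * b powr (-p)"
    by (simp add: powr_minus divide_inverse)
  also have "\<dots> \<le> k powr q * b powr (-p)"
    using assms by (intro mult_right_mono powr_mono) auto
  finally show ?thesis .
qed

lemma two_powr_le:
  fixes t :: real
  assumes "0 \<le> t" "t \<le> 1"
  shows "2 powr t \<le> 1 + t"
proof -
  have "exp ((1 - t) *\<^sub>R 0 + t *\<^sub>R ln 2) \<le> (1 - t) * exp 0 + t * exp (ln 2)"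
    using assms by (intro convex_onD[OF exp_convex]) auto
  then show ?thesis
    by (simp add: powr_def algebra_simps)
qed

lemma second_deriv_powr_2_3_bound_nonneg:
  fixes t :: real
  assumes "0 \<le> t" "t \<le> 1"
  shows "0 \<le> -1 + 4 / (1 + t)^3 - 7 * (ln 2)^2 * exp (t * ln 2) + 4 * (ln 3)^2 * exp (t * ln 3)"
proof -
  define E2 E3 where "E2 = exp (t * ln 2)" and "E3 = exp (t * ln 3)"
  have E: "0 \<le> E2" "E2 \<le> E3" "1 \<le> E3"
    using assms by (auto simp: E2_def E3_def intro!: mult_left_mono)
  have "(ln 2)^2 \<le> (25/36 :: real)^2"
    using ln2_le_25_over_36 by (intro power_mono) auto
  then have "7 * (ln 2)^2 * E2 \<le> 7 * (25/36)^2 * E3"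
    using E by (intro mult_mono) auto
  then have "7 * (ln 2)^2 * E2 \<le> 4375/1296 * E3"
    by (simp add: power2_eq_square)
  moreover have "1 \<le> ln (3 :: real)"
    using ln_ge_iff[of 3 1] e_less_272 by simp
  then have "4 * E3 \<le> 4 * (ln 3)^2 * E3"
    using E by (simp add: one_le_power)
  moreover have "1/2 \<le> 4 / (1 + t)^3"
  proof -
    have "(1 + t)^3 \<le> 2^3"
      using assms by (intro power_mono) auto
    then show ?thesis
      using assms by (simp add: field_simps)
  qed
  ultimately show ?thesis
    using E unfolding E2_def[symmetric] E3_def[symmetric] by linarith
qed

lemma powr_2_3_bound:
  fixes t :: real
  assumes "0 \<le> t" "t \<le> 1"
  shows "t * (1 - t) / 2 \<le> 7 * 2 powr t - 4 * 3 powr t - 1 - 2 / (1 + t)"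
proof -
  define g where "g t = t * (1 - t) / 2 + 1 + 2 / (1 + t) - 7 * exp (t * ln 2) + 4 * exp (t * ln 3)"
    for t :: real
  define g' where "g' t = 1/2 - t - 2 / (1 + t)^2 - 7 * ln 2 * exp (t * ln 2) + 4 * ln 3 * exp (t * ln 3)"
    for t :: real
  have "convex_on {0..1} g"
  proof (rule f''_ge0_imp_convex[where f' = g'])
    fix t :: real
    assume t: "t \<in> {0..1}"
    then have "1 + t \<noteq> 0"
      by simp
    then show "(g has_real_derivative g' t) (at t)"
      unfolding g_def[abs_def] g'_def
      by (auto intro!: derivative_eq_intros) (simp add: power2_eq_square field_simps)
    from \<open>1 + t \<noteq> 0\<close> show "(g' has_real_derivative
        -1 + 4 / (1 + t)^3 - 7 * (ln 2)^2 * exp (t * ln 2) + 4 * (ln 3)^2 * exp (t * ln 3)) (at t)"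
      unfolding g'_def[abs_def]
      by (auto intro!: derivative_eq_intros)
        (simp add: divide_simps power2_eq_square power3_eq_cube power4_eq_xxxx, algebra)
    show "0 \<le> -1 + 4 / (1 + t)^3 - 7 * (ln 2)^2 * exp (t * ln 2) + 4 * (ln 3)^2 * exp (t * ln 3)"
      using t by (intro second_deriv_powr_2_3_bound_nonneg) auto
  qed simp
  then have "g ((1 - t) *\<^sub>R 0 + t *\<^sub>R 1) \<le> (1 - t) * g 0 + t * g 1"
    using assms by (intro convex_onD) auto
  then show ?thesis
    by (simp add: g_def powr_def)
qed

lemma powr_neg_diff_ge:
  fixes a x :: real
  assumes "0 \<le> a" "0 < x"
  shows "a * (x + 1) powr (-1-a) \<le> x powr (-a) - (x + 1) powr (-a)"
proof -
  obtain t where t: "x < t" "t < x + 1"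
    and taylor: "x powr (-a) = (\<Sum>i<1. powr_deriv (-a) i (x + 1) / fact i * (-1)^i)
      + powr_deriv (-a) 1 t / fact 1 * (-1)^1"
    using powr_Taylor_down[of x "x + 1" 1 "-a"] assms by auto
  have "(x + 1) powr (-1-a) \<le> t powr (-1-a)"
    using t assms by (intro powr_mono2') auto
  then have "a * (x + 1) powr (-1-a) \<le> a * t powr (-1-a)"
    using assms by (intro mult_left_mono) auto
  also have "\<dots> = x powr (-a) - (x + 1) powr (-a)"
  proof -
    have "t powr (-1-a) = t powr (-a-1)"
      by (rule arg_cong[where f = "\<lambda>p. t powr p"]) simp
    then show ?thesis
      using taylor by (simp add: powr_deriv_def add.commute)
  qed
  finally show ?thesis .
qed

lemma sum_powr_neg_le:
  fixes a :: real
  assumes "0 \<le> a" "1 \<le> n"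
  shows "(\<Sum>k=1..n. a * real k powr (-1-a)) \<le> a + 1 - real n powr (-a)"
  using assms(2)
proof (induction n rule: dec_induct)
  case (step n)
  then show ?case
    using powr_neg_diff_ge[of a "real n"] assms(1) by (simp add: add.commute)
qed simp

lemma sum_by_parts:
  fixes f g :: "nat \<Rightarrow> 'a :: comm_ring"
  shows "(\<Sum>s=0..j. f s * (g s - g (s + 1)))
    = f 0 * g 0 - f j * g (j + 1) + (\<Sum>s=1..j. (f s - f (s - 1)) * g s)"
  by (induction j) (simp_all add: algebra_simps)

lemma quadratic_form_nonneg:
  fixes r0 r1 E a b :: real
  assumes "0 < r1 + E" "E^2 \<le> (r0 + E) * (r1 + E)"
  shows "0 \<le> r0 * a^2 + r1 * b^2 + E * (a - b)^2"
proof -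
  have "(r1 + E) * (r0 * a^2 + r1 * b^2 + E * (a - b)^2)
      = ((r1 + E) * b - E * a)^2 + ((r0 + E) * (r1 + E) - E^2) * a^2"
    by (simp add: power2_eq_square algebra_simps)
  also have "\<dots> \<ge> 0"
    using assms(2) by simp
  finally show ?thesis
    using assms(1) by (simp add: zero_le_mult_iff)
qed

lemma sum_sq_triangle_le:
  fixes a b :: real
  shows "(a + b)^2 \<le> 2 * a^2 + 2 * b^2"
  using sum_squares_bound[of a b] by (simp add: power2_eq_square algebra_simps)

lemma sum_convolution_diff:
  fixes r w :: "nat \<Rightarrow> 'a :: comm_ring"
  shows "(\<Sum>j=0..M. \<Sum>s=0..j. r (j - s) * (w (s + 1) - w s))
    = r 0 * w (M + 1) + (\<Sum>s=1..M. r (M + 1 - s) * w s) - (\<Sum>p=0..M. r p) * w 0"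
proof (induction M)
  case (Suc M)
  have "(\<Sum>s=0..Suc M. r (Suc M - s) * w (s + 1)) = (\<Sum>s=1..Suc (Suc M). r (M + 2 - s) * w s)"
    unfolding One_nat_def sum.shift_bounds_cl_Suc_ivl by simp
  moreover have "(\<Sum>s=0..Suc M. r (Suc M - s) * w s) = r (Suc M) * w 0 + (\<Sum>s=1..Suc M. r (Suc M - s) * w s)"
    by (simp add: sum.atLeast_Suc_atMost)
  moreover have "(\<Sum>s=1..Suc M. r (Suc M - s) * w s) = (\<Sum>s=1..M. r (Suc M - s) * w s) + r 0 * w (Suc M)"
    by simp
  ultimately show ?case
    using Suc by (simp add: algebra_simps sum_subtractf)
qed (simp add: algebra_simps)

section \<open>The coefficients of the L2 formula\<close>

definition l2r :: "real \<Rightarrow> nat \<Rightarrow> real" where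
  "l2r \<alpha> m = l2a \<alpha> m + l2b \<alpha> m - (if m = 0 then 0 else l2b \<alpha> (m - 1))"

lemma sum_l2a: "(\<Sum>p<n. l2a \<alpha> p) = real n powr (1 - \<alpha>)"
  by (induction n) (auto simp: l2a_def add.commute)

lemma sum_l2r: "(\<Sum>p=0..n. l2r \<alpha> p) = (\<Sum>p<n + 1. l2a \<alpha> p) + l2b \<alpha> n"
  by (induction n) (auto simp: l2r_def)

locale caputo_order =
  fixes \<alpha> :: real
  assumes order_pos: "0 < \<alpha>" and order_lt_1: "\<alpha> < 1"
begin

text \<open>\<open>l2b \<alpha> k\<close> is the error of the trapezoidal rule for \<open>f x = x powr (1 - \<alpha>)\<close> on \<open>[k, k + 1]\<close>;
  Taylor expansion about the midpoint exhibits its leading term \<open>- f''(k + 1/2) / 12\<close>.\<close>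

lemma l2b_midpoint_expansion:
  assumes "0 < k"
  obtains t1 t2 t3 t4
  where "real k < t1" "real k < t2" "real k < t3" "real k < t4"
    "l2b \<alpha> k = - powr_deriv (1 - \<alpha>) 2 (real k + 1/2) / 12
       + (powr_deriv (1 - \<alpha>) 3 t1 - powr_deriv (1 - \<alpha>) 3 t2) / 384
       - (powr_deriv (1 - \<alpha>) 3 t3 - powr_deriv (1 - \<alpha>) 3 t4) / 96"
proof -
  define x where "x = real k"
  define c where "c = x + 1/2"
  define e where "e = 1 - \<alpha>"
  define D where "D = powr_deriv e"
  have c: "0 < c" "x < c" "c < x + 1" "x + 1 - c = 1/2" "x - c = -1/2" "0 < x"
    using assms by (auto simp: c_def x_def)
  obtain t1 where t1: "c < t1"
    and G1: "(x+1) powr (1+e) = (\<Sum>m<4. powr_deriv (1+e) m c / fact m * (1/2)^m) + powr_deriv (1+e) 4 t1 / fact 4 * (1/2)^4"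
    using powr_Taylor_up[of c "x+1" 4 "1+e"] c by auto
  obtain t2 where t2: "x < t2"
    and G2: "x powr (1+e) = (\<Sum>m<4. powr_deriv (1+e) m c / fact m * (-1/2)^m) + powr_deriv (1+e) 4 t2 / fact 4 * (-1/2)^4"
    using powr_Taylor_down[of x c 4 "1+e"] c by auto
  obtain t3 where t3: "c < t3"
    and F1: "(x+1) powr e = (\<Sum>m<3. D m c / fact m * (1/2)^m) + D 3 t3 / fact 3 * (1/2)^3"
    using powr_Taylor_up[of c "x+1" 3 e] c by (auto simp: D_def)
  obtain t4 where t4: "x < t4"
    and F2: "x powr e = (\<Sum>m<3. D m c / fact m * (-1/2)^m) + D 3 t4 / fact 3 * (-1/2)^3"
    using powr_Taylor_down[of x c 3 e] c by (auto simp: D_def)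
  have shift: "powr_deriv (1+e) (Suc m) y = (1+e) * D m y" for m y
    by (simp add: D_def powr_deriv_Suc_shift)
  have "1 + e \<noteq> 0"
    using order_lt_1 by (simp add: e_def)
  have "l2b \<alpha> k = ((x+1) powr (1+e) - x powr (1+e)) / (1+e) - 1/2 * ((x+1) powr e + x powr e)"
    by (simp add: l2b_def x_def e_def add.commute diff_divide_distrib)
  also have "\<dots> = - D 2 c / 12 + (D 3 t1 - D 3 t2) / 384 - (D 3 t3 - D 3 t4) / 96"
    unfolding G1 G2 F1 F2 using \<open>1 + e \<noteq> 0\<close>
    by (simp add: eval_nat_numeral fact_numeral shift field_simps)
  finally have "l2b \<alpha> k = - D 2 c / 12 + (D 3 t1 - D 3 t2) / 384 - (D 3 t3 - D 3 t4) / 96" .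
  then show ?thesis
    using that[of t1 t2 t3 t4] t1 t2 t3 t4 c by (simp add: c_def x_def D_def e_def)
qed

lemma l2b_midpoint_estimate:
  assumes "0 < k"
  shows "\<bar>l2b \<alpha> k - \<alpha> * (1 - \<alpha>) * ((real k + 1/2) powr (-1-\<alpha>) / 12)\<bar>
           \<le> \<alpha> * (1 - \<alpha>) * (5 * (1 + \<alpha>) * real k powr (-2-\<alpha>) / 384)"
proof -
  define D where "D = powr_deriv (1 - \<alpha>) 3"
  obtain t1 t2 t3 t4 where t: "real k < t1" "real k < t2" "real k < t3" "real k < t4"
    and expansion: "l2b \<alpha> k = - powr_deriv (1 - \<alpha>) 2 (real k + 1/2) / 12
       + (D t1 - D t2) / 384 - (D t3 - D t4) / 96"
    using l2b_midpoint_expansion[OF assms] unfolding D_def by blast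
  have D2: "- powr_deriv (1 - \<alpha>) 2 (real k + 1/2) / 12 = \<alpha> * (1 - \<alpha>) * ((real k + 1/2) powr (-1-\<alpha>) / 12)"
    by (simp add: powr_deriv_2 algebra_simps)
  have D3: "5 * D (real k) / 384 = \<alpha> * (1 - \<alpha>) * (5 * (1 + \<alpha>) * real k powr (-2-\<alpha>) / 384)"
  proof -
    have "(1 - \<alpha>) * (1 - \<alpha> - 1) * (1 - \<alpha> - 2) = \<alpha> * (1 - \<alpha>) * (1 + \<alpha>)"
      "1 - \<alpha> - 3 = -2-\<alpha>"
      by (simp_all add: algebra_simps)
    then show ?thesis
      unfolding D_def powr_deriv_3 by simp
  qed
  have D_pos: "0 < D t" and D_le: "D t \<le> D (real k)" if "real k < t" for t
    using that assms order_pos order_lt_1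
    by (auto simp: D_def intro: powr_deriv_3_pos powr_deriv_3_antimono)
  have "\<bar>(D t1 - D t2) / 384 - (D t3 - D t4) / 96\<bar> \<le> 5 * D (real k) / 384"
    using D_pos[OF t(1)] D_pos[OF t(2)] D_pos[OF t(3)] D_pos[OF t(4)]
      D_le[OF t(1)] D_le[OF t(2)] D_le[OF t(3)] D_le[OF t(4)]
    unfolding abs_le_iff by argo
  then show ?thesis
    unfolding expansion D2[symmetric] D3[symmetric] by simp
qed

lemma l2b_le:
  assumes "0 < k"
  shows "l2b \<alpha> k \<le> \<alpha> * (1 - \<alpha>) * ((real k + 1/2) powr (-1-\<alpha>) / 12 + 10 * real k powr (-2-\<alpha>) / 384)"
proof -
  have "5 * (1 + \<alpha>) * real k powr (-2-\<alpha>) / 384 \<le> 10 * real k powr (-2-\<alpha>) / 384"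
    using order_lt_1 by (intro divide_right_mono mult_right_mono) auto
  then have "\<alpha> * (1 - \<alpha>) * (5 * (1 + \<alpha>) * real k powr (-2-\<alpha>) / 384)
      \<le> \<alpha> * (1 - \<alpha>) * (10 * real k powr (-2-\<alpha>) / 384)"
    using order_pos order_lt_1 by (intro mult_left_mono) auto
  then show ?thesis
    using l2b_midpoint_estimate[OF assms] unfolding abs_le_iff distrib_left by linarith
qed

lemma l2b_le_decay:
  assumes "0 < k"
  shows "l2b \<alpha> k \<le> \<alpha> * (1 - \<alpha>) / 8 * real k powr (-1-\<alpha>)"
proof -
  have "(real k + 1/2) powr (-1-\<alpha>) \<le> real k powr (-1-\<alpha>)"
    using assms order_pos by (intro powr_mono2') auto
  moreover have "real k powr (-2-\<alpha>) \<le> real k powr (-1-\<alpha>)"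
    using assms by (intro powr_mono) auto
  moreover have "0 \<le> real k powr (-1-\<alpha>)"
    by simp
  ultimately have "(real k + 1/2) powr (-1-\<alpha>) / 12 + 10 * real k powr (-2-\<alpha>) / 384
      \<le> real k powr (-1-\<alpha>) / 8"
    by argo
  then have "\<alpha> * (1 - \<alpha>) * ((real k + 1/2) powr (-1-\<alpha>) / 12 + 10 * real k powr (-2-\<alpha>) / 384)
      \<le> \<alpha> * (1 - \<alpha>) * (real k powr (-1-\<alpha>) / 8)"
    using order_pos order_lt_1 by (intro mult_left_mono) auto
  then show ?thesis
    using l2b_le[OF assms] by simp
qed

lemma l2b_0: "l2b \<alpha> 0 = 1 / (2 - \<alpha>) - 1/2"
  by (simp add: l2b_def)

lemma l2b_nonneg: "0 \<le> l2b \<alpha> k"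
proof (cases "k = 0")
  case True
  then show ?thesis
    using order_pos order_lt_1 by (simp add: l2b_0 field_simps)
next
  case False
  then have k: "0 < k"
    by simp
  have "real k powr (-(1+\<alpha>)) \<le> (3/2) powr 2 * (real k + 1/2) powr (-(1+\<alpha>))"
    using k order_pos order_lt_1 by (intro powr_neg_le_scaled) auto
  then have "real k powr (-1-\<alpha>) \<le> 9/4 * (real k + 1/2) powr (-1-\<alpha>)"
    by (simp add: power2_eq_square)
  moreover have "real k powr (-2-\<alpha>) \<le> real k powr (-1-\<alpha>)"
    using k by (intro powr_mono) auto
  moreover have "5 * (1 + \<alpha>) * real k powr (-2-\<alpha>) \<le> 10 * real k powr (-2-\<alpha>)"
    using order_lt_1 by (intro mult_right_mono) auto
  moreover have "0 \<le> (real k + 1/2) powr (-1-\<alpha>)"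
    by simp
  ultimately have "5 * (1 + \<alpha>) * real k powr (-2-\<alpha>) / 384 \<le> (real k + 1/2) powr (-1-\<alpha>) / 12"
    by linarith
  then have "\<alpha> * (1 - \<alpha>) * (5 * (1 + \<alpha>) * real k powr (-2-\<alpha>) / 384)
      \<le> \<alpha> * (1 - \<alpha>) * ((real k + 1/2) powr (-1-\<alpha>) / 12)"
    using order_pos order_lt_1 by (intro mult_left_mono) auto
  then show ?thesis
    using l2b_midpoint_estimate[OF k] unfolding abs_le_iff by linarith
qed

lemma l2a_ge:
  assumes "0 < m"
  shows "(1 - \<alpha>) * (real m + 1) powr (-\<alpha>) \<le> l2a \<alpha> m"
proof -
  define x where "x = real m"
  have x: "0 < x"
    using assms by (simp add: x_def)
  obtain t where t: "x < t" "t < x + 1" and taylor: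
    "x powr (1 - \<alpha>) = (\<Sum>i<2. powr_deriv (1 - \<alpha>) i (x + 1) / fact i * (-1)^i)
        + powr_deriv (1 - \<alpha>) 2 t / fact 2 * (-1)^2"
    using powr_Taylor_down[of x "x + 1" 2 "1 - \<alpha>"] x by auto
  have "powr_deriv (1 - \<alpha>) 2 t < 0"
    using t x order_pos order_lt_1 by (simp add: powr_deriv_2 mult_neg_pos mult_pos_neg)
  moreover have "(\<Sum>i<2. g i) = g 0 + g 1" for g :: "nat \<Rightarrow> real"
    by (simp add: eval_nat_numeral)
  ultimately show ?thesis
    using taylor by (simp add: l2a_def x_def powr_deriv_def add.commute)
qed

lemma l2a_diff_ge:
  assumes "0 < m"
  shows "\<alpha> * (1 - \<alpha>) * (real m + 1) powr (-1-\<alpha>) \<le> l2a \<alpha> m - l2a \<alpha> (m + 1)"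
proof -
  define x where "x = real m + 1"
  define D where "D = powr_deriv (1 - \<alpha>) 3"
  have x: "1 < x"
    using assms by (simp add: x_def)
  obtain t1 where t1: "x < t1" and up:
    "(x + 1) powr (1 - \<alpha>) = (\<Sum>i<3. powr_deriv (1 - \<alpha>) i x / fact i * 1^i) + D t1 / fact 3 * 1^3"
    using powr_Taylor_up[of x "x + 1" 3 "1 - \<alpha>"] x by (auto simp: D_def)
  obtain t2 where t2: "x - 1 < t2" "t2 < x" and down:
    "(x - 1) powr (1 - \<alpha>) = (\<Sum>i<3. powr_deriv (1 - \<alpha>) i x / fact i * (-1)^i) + D t2 / fact 3 * (-1)^3"
    using powr_Taylor_down[of "x - 1" x 3 "1 - \<alpha>"] x by (auto simp: D_def)
  have "D t1 \<le> D t2"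
    using t1 t2 x order_pos order_lt_1 unfolding D_def by (intro powr_deriv_3_antimono) auto
  moreover have "- powr_deriv (1 - \<alpha>) 2 x = \<alpha> * (1 - \<alpha>) * x powr (-1-\<alpha>)"
    by (simp add: powr_deriv_2 algebra_simps)
  moreover have "l2a \<alpha> m - l2a \<alpha> (m + 1)
      = - powr_deriv (1 - \<alpha>) 2 x - (D t1 - D t2) / 6"
  proof -
    have "l2a \<alpha> m = x powr (1 - \<alpha>) - (x - 1) powr (1 - \<alpha>)"
      "l2a \<alpha> (m + 1) = (x + 1) powr (1 - \<alpha>) - x powr (1 - \<alpha>)"
      by (simp_all add: l2a_def x_def add.commute)
    moreover have "(\<Sum>i<3. g i) = g 0 + g 1 + g 2" for g :: "nat \<Rightarrow> real"
      by (simp add: eval_nat_numeral)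
    ultimately show ?thesis
      using up down by (simp add: fact_numeral diff_divide_distrib)
  qed
  ultimately show ?thesis
    by (simp add: x_def)
qed

lemma two_l2b_le_l2r:
  assumes "2 \<le> m"
  shows "2 * l2b \<alpha> m \<le> l2r \<alpha> m"
proof -
  define X where "X = \<alpha> * (1 - \<alpha>)"
  define P where "P = (real m + 1) powr (-\<alpha>)"
  have X: "0 \<le> X" "3 * X / 4 \<le> 1 - \<alpha>"
  proof -
    show "0 \<le> X"
      using order_pos order_lt_1 by (simp add: X_def)
    have "(1 - \<alpha>) * (3 * \<alpha> / 4) \<le> (1 - \<alpha>) * 1"
      using order_pos order_lt_1 by (intro mult_left_mono) auto
    then show "3 * X / 4 \<le> 1 - \<alpha>"
      by (simp add: X_def algebra_simps)
  qed
  have m1: "real (m - 1) = real m - 1"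
    using assms by simp
  have "l2b \<alpha> m \<le> X / 8 * real m powr (-1-\<alpha>)"
    using l2b_le_decay[of m] assms by (simp add: X_def)
  also have "\<dots> \<le> X / 8 * (real m - 1) powr (-1-\<alpha>)"
    using assms X order_pos by (intro mult_left_mono powr_mono2') auto
  finally have "l2b \<alpha> m \<le> X / 8 * (real m - 1) powr (-1-\<alpha>)" .
  moreover have "l2b \<alpha> (m - 1) \<le> X / 8 * (real m - 1) powr (-1-\<alpha>)"
    using l2b_le_decay[of "m - 1"] assms m1 by (simp add: X_def)
  ultimately have "l2b \<alpha> m + l2b \<alpha> (m - 1) \<le> X / 4 * (real m - 1) powr (-1-\<alpha>)"
    by simp
  also have "\<dots> \<le> X / 4 * (3 * P)"
  proof -
    have "(real m - 1) powr (-1-\<alpha>) \<le> (real m - 1) powr (-\<alpha>)"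
      using assms by (intro powr_mono) auto
    also have "\<dots> \<le> 3 powr 1 * P"
      unfolding P_def using assms order_pos order_lt_1 by (intro powr_neg_le_scaled) auto
    finally show ?thesis
      using X by (intro mult_left_mono) auto
  qed
  also have "\<dots> \<le> (1 - \<alpha>) * P"
    using X by (simp add: P_def mult_right_mono)
  also have "\<dots> \<le> l2a \<alpha> m"
    unfolding P_def using assms by (intro l2a_ge) auto
  finally show ?thesis
    using assms by (simp add: l2r_def)
qed

lemma l2b_le_scaled:
  assumes "0 < k" "0 < y" "1 \<le> A" "1 \<le> B" "y \<le> A * (real k + 1/2)" "y \<le> B * real k"
  shows "l2b \<alpha> k \<le> \<alpha> * (1 - \<alpha>) * ((A^2 / 12 + 10 * B^2 / 384) * y powr (-1-\<alpha>))"
proof -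
  have "(real k + 1/2) powr (-(1+\<alpha>)) \<le> A powr 2 * y powr (-(1+\<alpha>))"
    using assms order_pos order_lt_1 by (intro powr_neg_le_scaled) auto
  moreover have "real k powr (-2-\<alpha>) \<le> real k powr (-(1+\<alpha>))"
    using assms by (intro powr_mono) auto
  moreover have "real k powr (-(1+\<alpha>)) \<le> B powr 2 * y powr (-(1+\<alpha>))"
    using assms order_pos order_lt_1 by (intro powr_neg_le_scaled) auto
  ultimately have "(real k + 1/2) powr (-1-\<alpha>) / 12 + 10 * real k powr (-2-\<alpha>) / 384
      \<le> (A^2 / 12 + 10 * B^2 / 384) * y powr (-1-\<alpha>)"
    using assms by (simp add: powr_numeral algebra_simps)
  then have "\<alpha> * (1 - \<alpha>) * ((real k + 1/2) powr (-1-\<alpha>) / 12 + 10 * real k powr (-2-\<alpha>) / 384)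
      \<le> \<alpha> * (1 - \<alpha>) * ((A^2 / 12 + 10 * B^2 / 384) * y powr (-1-\<alpha>))"
    using order_pos order_lt_1 by (intro mult_left_mono) auto
  then show ?thesis
    using l2b_le[OF assms(1)] by linarith
qed

lemma l2b_le_l2r_diff:
  assumes "2 \<le> m"
  shows "l2b \<alpha> (m + 2) \<le> l2r \<alpha> m - l2r \<alpha> (m + 1)"
proof -
  define X where "X = \<alpha> * (1 - \<alpha>)"
  define Y where "Y = (real m + 1) powr (-1-\<alpha>)"
  have "l2b \<alpha> (m - 1) \<le> X * ((2^2 / 12 + 10 * 3^2 / 384) * Y)"
    unfolding X_def Y_def using assms by (intro l2b_le_scaled) auto
  moreover have "l2b \<alpha> (m + 1) \<le> X * ((1^2 / 12 + 10 * 1^2 / 384) * Y)"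
    unfolding X_def Y_def using assms by (intro l2b_le_scaled) auto
  moreover have "l2b \<alpha> (m + 2) \<le> X * ((1^2 / 12 + 10 * 1^2 / 384) * Y)"
    unfolding X_def Y_def using assms by (intro l2b_le_scaled) auto
  moreover have "X * Y \<le> l2a \<alpha> m - l2a \<alpha> (m + 1)"
    unfolding X_def Y_def using assms by (intro l2a_diff_ge) auto
  moreover have "0 \<le> X * Y"
    using order_pos order_lt_1 by (simp add: X_def Y_def)
  ultimately show ?thesis
    using assms l2b_nonneg[of m] by (simp add: l2r_def algebra_simps)
qed

lemma l2b_le_inverse:
  assumes "0 < k"
  shows "l2b \<alpha> k \<le> \<alpha> * (1 - \<alpha>) / (8 * real k)"
proof -
  have "l2b \<alpha> k \<le> \<alpha> * (1 - \<alpha>) / 8 * real k powr (-1-\<alpha>)"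
    using l2b_le_decay[OF assms] .
  also have "\<dots> \<le> \<alpha> * (1 - \<alpha>) / 8 * real k powr (-1)"
    using assms order_pos order_lt_1 by (intro mult_left_mono powr_mono) auto
  also have "\<dots> = \<alpha> * (1 - \<alpha>) / (8 * real k)"
    using assms by (simp add: powr_minus_divide)
  finally show ?thesis .
qed

lemma sum_l2b_le: "(\<Sum>k=1..n. l2b \<alpha> k) \<le> 1/4"
proof (cases "n = 0")
  case False
  have "(\<Sum>k=1..n. l2b \<alpha> k) \<le> (\<Sum>k=1..n. (1 - \<alpha>) / 8 * (\<alpha> * real k powr (-1-\<alpha>)))"
    using l2b_le_decay by (intro sum_mono) (simp add: algebra_simps)
  also have "\<dots> = (1 - \<alpha>) / 8 * (\<Sum>k=1..n. \<alpha> * real k powr (-1-\<alpha>))"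
    by (simp add: sum_distrib_left)
  also have "\<dots> \<le> (1 - \<alpha>) / 8 * (1 + \<alpha>)"
  proof -
    have "(\<Sum>k=1..n. \<alpha> * real k powr (-1-\<alpha>)) \<le> \<alpha> + 1 - real n powr (-\<alpha>)"
      using False order_pos by (intro sum_powr_neg_le) auto
    also have "\<dots> \<le> 1 + \<alpha>"
      by simp
    finally show ?thesis
      using order_lt_1 by (intro mult_left_mono) auto
  qed
  also have "\<dots> \<le> 1/4"
    using order_pos by (simp add: algebra_simps)
  finally show ?thesis .
qed simp

lemma l2b_le_half: "l2b \<alpha> k \<le> 1/2"
proof (cases "k = 0")
  case True
  then show ?thesis
    using order_pos order_lt_1 by (simp add: l2b_0 field_simps)
next
  case False
  then have "l2b \<alpha> k \<le> (\<Sum>j=1..k. l2b \<alpha> j)"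
    using l2b_nonneg by (intro member_le_sum) auto
  then show ?thesis
    using sum_l2b_le[of k] by linarith
qed

text \<open>Read in the index \<open>p\<close> of \<open>l2c \<alpha> j p\<close>, the coefficients drop by at least \<open>head_gap\<close> from
  \<open>p = 0\<close> to \<open>p = 1\<close>, rise by at most \<open>head_defect\<close> from \<open>p = 1\<close> to \<open>p = 2\<close> and are
  nonincreasing afterwards. The positivity argument only needs \<open>4 * head_defect \<le> head_gap\<close>.\<close>

definition head_gap :: real where
  "head_gap = l2r \<alpha> 0 - l2r \<alpha> 1 - l2b \<alpha> 2"

definition head_defect :: real where
  "head_defect = max 0 (max (2 * l2b \<alpha> 1 - l2r \<alpha> 1) (l2r \<alpha> 2 + l2b \<alpha> 3 - l2r \<alpha> 1))"

lemma head_defect_nonneg: "0 \<le> head_defect"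
  by (simp add: head_defect_def)

lemma
  shows l2r_0_bounds: "1 \<le> l2r \<alpha> 0" "l2r \<alpha> 0 \<le> 3/2"
    and l2r_0_plus_l2r_1_ge: "1 \<le> l2r \<alpha> 0 + l2r \<alpha> 1"
    and l2b_2_le: "l2b \<alpha> 2 \<le> 1/4"
    and head_gap_le: "head_gap \<le> 2"
    and four_head_defect_le_head_gap: "4 * head_defect \<le> head_gap"
proof -
  define u P2 P3 X where "u = 1 / (2 - \<alpha>)" and "P2 = 2 powr (1 - \<alpha>)"
    and "P3 = 3 powr (1 - \<alpha>)" and "X = \<alpha> * (1 - \<alpha>)"
  have r: "l2r \<alpha> 0 = u + 1/2" "l2r \<alpha> 1 = P2 - 1 + l2b \<alpha> 1 - (u - 1/2)"
    "l2r \<alpha> 2 = P3 - P2 + l2b \<alpha> 2 - l2b \<alpha> 1"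
    by (simp_all add: l2r_def l2a_def l2b_0 u_def P2_def P3_def)
  have u: "1/2 \<le> u" "2 * u \<le> 1 + \<alpha>"
  proof -
    show "1/2 \<le> u"
      using order_pos order_lt_1 by (simp add: u_def field_simps)
    have "2 \<le> (1 + \<alpha>) * (2 - \<alpha>)"
      using order_pos order_lt_1 by (simp add: algebra_simps mult_left_le)
    then show "2 * u \<le> 1 + \<alpha>"
      using order_lt_1 by (simp add: u_def field_simps)
  qed
  have P2: "1 \<le> P2" "P2 \<le> 2 - \<alpha>"
    using order_pos order_lt_1 two_powr_le[of "1 - \<alpha>"] by (auto simp: P2_def ge_one_powr_ge_zero)
  have bound_2_3: "X / 2 \<le> 7 * P2 - 4 * P3 - 1 - 2 * u"
    using powr_2_3_bound[of "1 - \<alpha>"] order_pos order_lt_1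
    by (simp add: X_def P2_def P3_def u_def algebra_simps)
  have X: "0 \<le> X" "X \<le> \<alpha>" "X \<le> 1 - \<alpha>"
    using order_pos order_lt_1 by (auto simp: X_def mult_left_le mult_left_le_one_le)
  have b: "l2b \<alpha> 1 \<le> X / 8" "l2b \<alpha> 2 \<le> X / 16" "l2b \<alpha> 3 \<le> X / 24"
    "0 \<le> l2b \<alpha> 1" "0 \<le> l2b \<alpha> 2"
    using l2b_le_inverse[of 1] l2b_le_inverse[of 2] l2b_le_inverse[of 3] l2b_nonneg
    by (simp_all add: X_def)
  note facts = u P2 X b order_lt_1 bound_2_3
  show "1 \<le> l2r \<alpha> 0" "l2r \<alpha> 0 \<le> 3/2" "1 \<le> l2r \<alpha> 0 + l2r \<alpha> 1"
    "l2b \<alpha> 2 \<le> 1/4" "head_gap \<le> 2"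
    unfolding r head_gap_def using facts by - linarith+
  have "0 \<le> head_gap" "4 * (2 * l2b \<alpha> 1 - l2r \<alpha> 1) \<le> head_gap"
    "4 * (l2r \<alpha> 2 + l2b \<alpha> 3 - l2r \<alpha> 1) \<le> head_gap"
    unfolding r head_gap_def using facts by - argo+
  then show "4 * head_defect \<le> head_gap"
    unfolding head_defect_def by linarith
qed

end

section \<open>Positivity of the L2 formula\<close>

lemma l2c_eq_l2r:
  assumes "1 \<le> j" "p \<le> j"
  shows "l2c \<alpha> j p = l2r \<alpha> p + (if p = j - 1 then l2b \<alpha> j else 0) - (if p = j then 2 * l2b \<alpha> j else 0)"
proof -
  consider "j = 1" | "j = 2" | "3 \<le> j"
    using assms by linarith
  then show ?thesis
  proof cases
    case 1
    then have "p = 0 \<or> p = 1"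
      using assms by auto
    then show ?thesis
      using 1 by (auto simp: l2c_def l2r_def)
  next
    case 2
    then have "p = 0 \<or> p = 1 \<or> p = 2"
      using assms by auto
    then show ?thesis
      using 2 by (auto simp: l2c_def l2r_def)
  next
    case 3
    then have "p = 0 \<or> (1 \<le> p \<and> p \<le> j - 2) \<or> p = j - 1 \<or> p = j"
      using assms by auto
    moreover have "j - 1 - 1 = j - 2"
      by simp
    ultimately show ?thesis
      using 3 by (auto simp: l2c_def l2r_def numeral_2_eq_2)
  qed
qed
definition l2_sum :: "real \<Rightarrow> (nat \<Rightarrow> real) \<Rightarrow> nat \<Rightarrow> real" where
  "l2_sum \<alpha> v j = (\<Sum>s=0..j. l2c \<alpha> j (j - s) * (v (s + 1) - v s))"

lemma L2op_eq_l2_sum: "L2op \<alpha> \<tau> w i j = \<tau> powr (-\<alpha>) / Gamma (2 - \<alpha>) * l2_sum \<alpha> (\<lambda>s. w i s) j"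
  by (simp add: L2op_def l2_sum_def)

lemma l2_sum_mult_next:
  "l2_sum \<alpha> v j * v (j + 1) = l2_sum \<alpha> (\<lambda>s. (v s)^2) j / 2
     + (\<Sum>s=0..j. l2c \<alpha> j (j - s) * ((v (j + 1) - v s)^2 - (v (j + 1) - v (s + 1))^2)) / 2"
proof -
  have "l2_sum \<alpha> v j * v (j + 1) = (\<Sum>s=0..j. (l2c \<alpha> j (j - s) * ((v (s + 1))^2 - (v s)^2)
         + l2c \<alpha> j (j - s) * ((v (j + 1) - v s)^2 - (v (j + 1) - v (s + 1))^2)) / 2)"
    unfolding l2_sum_def sum_distrib_right
    by (intro sum.cong refl) (simp add: power2_eq_square algebra_simps)
  then show ?thesis
    by (simp add: l2_sum_def sum.distrib add_divide_distrib sum_divide_distrib)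
qed
lemma l2_sum_eq_l2r_sum:
  assumes "1 \<le> j"
  shows "l2_sum \<alpha> w j = (\<Sum>s=0..j. l2r \<alpha> (j - s) * (w (s + 1) - w s))
    + l2b \<alpha> j * (w 2 - w 1) - 2 * l2b \<alpha> j * (w 1 - w 0)"
proof -
  have "l2_sum \<alpha> w j = (\<Sum>s=0..j. l2r \<alpha> (j - s) * (w (s + 1) - w s)
      + (if s = 1 then l2b \<alpha> j * (w (s + 1) - w s) else 0)
      - (if s = 0 then 2 * l2b \<alpha> j * (w (s + 1) - w s) else 0))"
    unfolding l2_sum_def
  proof (intro sum.cong refl)
    fix s
    assume "s \<in> {0..j}"
    then have "(j - s = j - 1) = (s = 1)" "(j - s = j) = (s = 0)" "j - s \<le> j"
      using assms by auto
    then have c: "l2c \<alpha> j (j - s)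
        = l2r \<alpha> (j - s) + (if s = 1 then l2b \<alpha> j else 0) - (if s = 0 then 2 * l2b \<alpha> j else 0)"
      using l2c_eq_l2r[OF assms, of "j - s" \<alpha>] by simp
    then show "l2c \<alpha> j (j - s) * (w (s + 1) - w s) = l2r \<alpha> (j - s) * (w (s + 1) - w s)
      + (if s = 1 then l2b \<alpha> j * (w (s + 1) - w s) else 0)
      - (if s = 0 then 2 * l2b \<alpha> j * (w (s + 1) - w s) else 0)"
      unfolding c by (simp add: algebra_simps)
  qed
  also have "\<dots> = (\<Sum>s=0..j. l2r \<alpha> (j - s) * (w (s + 1) - w s))
      + l2b \<alpha> j * (w 2 - w 1) - 2 * l2b \<alpha> j * (w 1 - w 0)"
    using assms by (simp add: sum.distrib sum_subtractf numeral_2_eq_2)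
  finally show ?thesis .
qed

lemma sum_l2_sum_eq:
  fixes \<alpha> :: real and M :: nat and w :: "nat \<Rightarrow> real"
  assumes "2 \<le> M"
  defines "B \<equiv> (\<Sum>j=1..M-1. l2b \<alpha> j)"
  shows "(\<Sum>j=1..M-1. l2_sum \<alpha> w j) = l2r \<alpha> 0 * w M + (\<Sum>s=1..M-1. l2r \<alpha> (M - s) * w s)
    - (\<Sum>p=0..M-1. l2r \<alpha> p) * w 0 - l2r \<alpha> 0 * (w 1 - w 0) + B * (w 2 - w 1) - 2 * B * (w 1 - w 0)"
proof -
  define R where "R j = (\<Sum>s=0..j. l2r \<alpha> (j - s) * (w (s + 1) - w s))" for j
  have "(\<Sum>j=1..M-1. l2_sum \<alpha> w j)
      = (\<Sum>j=1..M-1. R j + l2b \<alpha> j * (w 2 - w 1) - 2 * l2b \<alpha> j * (w 1 - w 0))"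
    unfolding R_def by (intro sum.cong) (auto simp: l2_sum_eq_l2r_sum)
  also have "\<dots> = (\<Sum>j=1..M-1. R j) + B * (w 2 - w 1) - 2 * B * (w 1 - w 0)"
  proof -
    have "(\<Sum>j=1..M-1. l2b \<alpha> j * (w 2 - w 1)) = B * (w 2 - w 1)"
      "(\<Sum>j=1..M-1. 2 * l2b \<alpha> j * (w 1 - w 0)) = 2 * B * (w 1 - w 0)"
      by (simp_all only: B_def sum_distrib_right sum_distrib_left)
    then show ?thesis
      by (simp add: sum.distrib sum_subtractf)
  qed
  also have "(\<Sum>j=1..M-1. R j) = (\<Sum>j=0..M-1. R j) - l2r \<alpha> 0 * (w 1 - w 0)"
    by (simp add: R_def sum.atLeast_Suc_atMost)
  also have "(\<Sum>j=0..M-1. R j) = l2r \<alpha> 0 * w M + (\<Sum>s=1..M-1. l2r \<alpha> (M - s) * w s)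
      - (\<Sum>p=0..M-1. l2r \<alpha> p) * w 0"
    using sum_convolution_diff[of "l2r \<alpha>" w "M - 1"] assms(1) by (simp add: R_def)
  finally show ?thesis
    by simp
qed

context caputo_order
begin

lemma l2r_nonneg: "2 \<le> m \<Longrightarrow> 0 \<le> l2r \<alpha> m"
  using two_l2b_le_l2r[of m] l2b_nonneg[of m] by linarith

lemma head_gap_le_l2c_0_minus_1:
  assumes "1 \<le> j"
  shows "head_gap \<le> l2c \<alpha> j 0 - l2c \<alpha> j 1"
  using assms l2c_eq_l2r[of j 0 \<alpha>] l2c_eq_l2r[of j 1 \<alpha>] l2b_nonneg[of j] l2b_nonneg[of 2]
  by (cases "j = 1 \<or> j = 2") (auto simp: head_gap_def)

lemma l2c_1_1_ge: "- head_defect \<le> l2c \<alpha> 1 1"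
  using l2c_eq_l2r[of 1 1 \<alpha>] by (simp add: head_defect_def)

lemma l2c_1_minus_2_ge:
  assumes "2 \<le> j"
  shows "- head_defect \<le> l2c \<alpha> j 1 - l2c \<alpha> j 2"
  using assms l2c_eq_l2r[of j 1 \<alpha>] l2c_eq_l2r[of j 2 \<alpha>] l2b_nonneg[of j] l2b_nonneg[of 3]
  by (cases "j = 2 \<or> j = 3") (auto simp: head_defect_def)

lemma l2c_antimono_tail:
  assumes "2 \<le> p" "p + 1 \<le> j"
  shows "l2c \<alpha> j (p + 1) \<le> l2c \<alpha> j p"
  using assms l2c_eq_l2r[of j p \<alpha>] l2c_eq_l2r[of j "p + 1" \<alpha>] l2b_le_l2r_diff[of p]
    l2b_nonneg[of "p + 2"] l2b_nonneg[of j]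
  by (cases "p + 1 = j \<or> p + 2 = j") auto

lemma l2c_last_nonneg: "2 \<le> j \<Longrightarrow> 0 \<le> l2c \<alpha> j j"
  using l2c_eq_l2r[of j j \<alpha>] two_l2b_le_l2r[of j] by auto

lemma l2_sum_remainder_ge:
  assumes "1 \<le> j"
  shows "head_gap * (v (j + 1) - v j)^2 - head_defect * (v (j + 1) - v (j - 1))^2
    \<le> (\<Sum>s=0..j. l2c \<alpha> j (j - s) * ((v (j + 1) - v s)^2 - (v (j + 1) - v (s + 1))^2))"
proof -
  define T where "T s = (v (j + 1) - v s)^2" for s
  have T: "0 \<le> T s" for s
    by (simp add: T_def)
  have "(\<Sum>s=0..j. l2c \<alpha> j (j - s) * (T s - T (s + 1)))
      = l2c \<alpha> j j * T 0 + (\<Sum>s=1..j. (l2c \<alpha> j (j - s) - l2c \<alpha> j (j - s + 1)) * T s)"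
  proof -
    have "j - (s - 1) = j - s + 1" if "s \<in> {1..j}" for s
      using that by auto
    then show ?thesis
      using sum_by_parts[of "\<lambda>s. l2c \<alpha> j (j - s)" T j] by (simp add: T_def)
  qed
  moreover have "head_gap * T j - head_defect * T (j - 1)
      \<le> l2c \<alpha> j j * T 0 + (\<Sum>s=1..j. (l2c \<alpha> j (j - s) - l2c \<alpha> j (j - s + 1)) * T s)"
  proof (cases "j = 1")
    case True
    have "- head_defect * T 0 \<le> l2c \<alpha> 1 1 * T 0"
      using l2c_1_1_ge T by (intro mult_right_mono)
    moreover have "head_gap * T 1 \<le> (l2c \<alpha> 1 0 - l2c \<alpha> 1 1) * T 1"
      using head_gap_le_l2c_0_minus_1[of 1] T by (intro mult_right_mono) auto
    ultimately show ?thesis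
      using True by simp
  next
    case False
    then obtain k where k: "j = k + 2"
      using assms by (intro that[of "j - 2"]) auto
    have "(\<Sum>s=1..j. (l2c \<alpha> j (j - s) - l2c \<alpha> j (j - s + 1)) * T s)
        = (\<Sum>s=1..k. (l2c \<alpha> j (j - s) - l2c \<alpha> j (j - s + 1)) * T s)
          + (l2c \<alpha> j 1 - l2c \<alpha> j 2) * T (j - 1) + (l2c \<alpha> j 0 - l2c \<alpha> j 1) * T j"
      by (simp add: k numeral_2_eq_2)
    moreover have "0 \<le> (\<Sum>s=1..k. (l2c \<alpha> j (j - s) - l2c \<alpha> j (j - s + 1)) * T s)"
      using k l2c_antimono_tail[of "j - s" j for s] T
      by (intro sum_nonneg mult_nonneg_nonneg) auto
    moreover have "- head_defect * T (j - 1) \<le> (l2c \<alpha> j 1 - l2c \<alpha> j 2) * T (j - 1)"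
      using k l2c_1_minus_2_ge[of j] T by (intro mult_right_mono) auto
    moreover have "head_gap * T j \<le> (l2c \<alpha> j 0 - l2c \<alpha> j 1) * T j"
      using assms head_gap_le_l2c_0_minus_1[of j] T by (intro mult_right_mono) auto
    moreover have "0 \<le> l2c \<alpha> j j * T 0"
      using k l2c_last_nonneg[of j] T by simp
    ultimately show ?thesis
      by linarith
  qed
  ultimately show ?thesis
    by (simp add: T_def)
qed

lemma sum_l2_sum_remainder_ge:
  fixes v :: "nat \<Rightarrow> real" and M :: nat
  assumes "2 \<le> M"
  shows "(head_gap - 2 * head_defect) * (v M - v (M - 1))^2 - 2 * head_defect * (v 1 - v 0)^2
    \<le> (\<Sum>j=1..M-1. head_gap * (v (j + 1) - v j)^2 - head_defect * (v (j + 1) - v (j - 1))^2)"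
  using assms
proof (induction M rule: dec_induct)
  case base
  have "head_defect * (v 2 - v 0)^2 \<le> head_defect * (2 * (v 2 - v 1)^2 + 2 * (v 1 - v 0)^2)"
    using sum_sq_triangle_le[of "v 2 - v 1" "v 1 - v 0"] head_defect_nonneg
    by (intro mult_left_mono) auto
  then show ?case
    by (simp add: numeral_2_eq_2 algebra_simps)
next
  case (step M)
  have "head_defect * (v (M + 1) - v (M - 1))^2
      \<le> head_defect * (2 * (v (M + 1) - v M)^2 + 2 * (v M - v (M - 1))^2)"
    using sum_sq_triangle_le[of "v (M + 1) - v M" "v M - v (M - 1)"] head_defect_nonneg
    by (intro mult_left_mono) auto
  moreover have "0 \<le> (head_gap - 4 * head_defect) * (v M - v (M - 1))^2"
    using four_head_defect_le_head_gap by simp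
  moreover have "(\<Sum>j=1..Suc M - 1. F j) = (\<Sum>j=1..M - 1. F j) + F M" for F :: "nat \<Rightarrow> real"
    using step(1) by (cases M) auto
  ultimately show ?case
    using step(3) by (simp add: algebra_simps)
qed

lemma sum_l2_sum_ge:
  assumes M: "2 \<le> M" and w: "\<And>s. 0 \<le> w s"
  shows "l2r \<alpha> 0 * w M + l2r \<alpha> 1 * w (M - 1) - 3 * real M powr (1 - \<alpha>) * (w 0 + w 1)
    \<le> (\<Sum>j=1..M-1. l2_sum \<alpha> w j)"
proof -
  obtain k where k: "M = k + 2"
    using M by (metis add.commute le_Suc_ex)
  define B where "B = (\<Sum>j=1..k+1. l2b \<alpha> j)"
  define S where "S = (\<Sum>s=1..k+1. l2r \<alpha> (k + 2 - s) * w s)"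
  define P where "P = real M powr (1 - \<alpha>)"
  have sum_eq: "(\<Sum>j=1..M-1. l2_sum \<alpha> w j) = l2r \<alpha> 0 * w M + S
      - (\<Sum>p=0..k+1. l2r \<alpha> p) * w 0 - l2r \<alpha> 0 * (w 1 - w 0) + B * (w 2 - w 1) - 2 * B * (w 1 - w 0)"
    using sum_l2_sum_eq[OF M, of \<alpha> w] by (simp add: k B_def S_def)
  have "l2r \<alpha> 1 * w (M - 1) \<le> S"
  proof -
    have "0 \<le> (\<Sum>s=1..k. l2r \<alpha> (k + 2 - s) * w s)"
      using w by (intro sum_nonneg mult_nonneg_nonneg l2r_nonneg) auto
    then show ?thesis
      by (simp add: S_def k)
  qed
  moreover have "(\<Sum>p=0..k+1. l2r \<alpha> p) * w 0 \<le> (P + 1/2) * w 0"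
  proof -
    have "(\<Sum>p=0..k+1. l2r \<alpha> p) = P + l2b \<alpha> (k + 1)"
      using sum_l2r[of \<alpha> "k + 1"] sum_l2a[of \<alpha> "k + 2"] by (simp add: P_def k)
    then show ?thesis
      using l2b_le_half[of "k + 1"] w by (intro mult_right_mono) auto
  qed
  moreover have "0 \<le> B * w 2" "0 \<le> B * w 0" "B * w 1 \<le> 1/4 * w 1"
  proof -
    have "0 \<le> B"
      unfolding B_def using l2b_nonneg by (intro sum_nonneg) auto
    then show "0 \<le> B * w 2" "0 \<le> B * w 0"
      using w by simp_all
    have "B \<le> 1/4"
      unfolding B_def by (rule sum_l2b_le)
    then show "B * w 1 \<le> 1/4 * w 1"
      using w by (rule mult_right_mono)
  qed
  moreover have "l2r \<alpha> 0 * w 1 \<le> 3/2 * w 1"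
    using l2r_0_bounds(2) w by (rule mult_right_mono)
  moreover have "0 \<le> l2r \<alpha> 0 * w 0"
    using l2r_0_bounds(1) w[of 0] by simp
  moreover have "w 0 \<le> P * w 0" "w 1 \<le> P * w 1"
  proof -
    have "1 \<le> P"
      unfolding P_def using M order_lt_1 by (intro ge_one_powr_ge_zero) auto
    then show "w 0 \<le> P * w 0" "w 1 \<le> P * w 1"
      using w mult_right_mono[of 1 P] by auto
  qed
  ultimately show ?thesis
    unfolding sum_eq P_def[symmetric] using w[of 0] w[of 1] by (simp add: algebra_simps)
qed

lemma head_quadratic_form_nonneg:
  "0 \<le> l2r \<alpha> 0 * a^2 + l2r \<alpha> 1 * b^2 + (head_gap - 2 * head_defect) * (a - b)^2"
proof -
  define r0 r1 E b2 where "r0 = l2r \<alpha> 0" and "r1 = l2r \<alpha> 1"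
    and "E = head_gap - 2 * head_defect" and "b2 = l2b \<alpha> 2"
  have gap: "head_gap = r0 - r1 - b2"
    by (simp add: head_gap_def r0_def r1_def b2_def)
  have E: "head_gap \<le> 2 * E" "0 \<le> E"
    using four_head_defect_le_head_gap head_defect_nonneg by (auto simp: E_def)
  have r: "1 \<le> r0" "r0 \<le> 3/2" "1 \<le> r0 + r1"
    using l2r_0_bounds l2r_0_plus_l2r_1_ge by (auto simp: r0_def r1_def)
  have b2: "0 \<le> b2" "b2 \<le> 1/4"
    using l2b_nonneg[of 2] l2b_2_le by (auto simp: b2_def)
  have "0 \<le> r0 * r1 + E * (r0 + r1)"
  proof (cases "0 \<le> r1")
    case True
    then show ?thesis
      using r E by simp
  next
    case False
    define t where "t = - r1"
    have t: "0 < t" "t \<le> r0 - 1"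
      using False r by (auto simp: t_def)
    have "0 \<le> (1 - 2 * (r0 - 1)^2 - b2) + ((r0 - 1) - t) * ((r0 - 1) + t - b2 + 2 * r0)"
    proof -
      have "(r0 - 1)^2 \<le> (1/2)^2"
        using r by (intro power_mono) auto
      moreover have "0 \<le> ((r0 - 1) - t) * ((r0 - 1) + t - b2 + 2 * r0)"
        using t r b2 by (intro mult_nonneg_nonneg) auto
      ultimately show ?thesis
        using b2 by (simp add: power2_eq_square)
    qed
    also have "\<dots> = 2 * (r0 * r1) + head_gap * (r0 + r1)"
      unfolding gap t_def by (simp add: power2_eq_square algebra_simps)
    also have "\<dots> \<le> 2 * (r0 * r1) + 2 * E * (r0 + r1)"
      using E r by (simp add: mult_right_mono)
    finally show ?thesis
      by simp
  qed
  moreover have "0 < r1 + E"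
    using E r b2 gap by linarith
  ultimately show ?thesis
    unfolding r0_def[symmetric] r1_def[symmetric] E_def[symmetric]
    by (intro quadratic_form_nonneg) (auto simp: power2_eq_square algebra_simps)
qed

theorem sum_l2_sum_mult_next_ge:
  fixes v :: "nat \<Rightarrow> real"
  assumes M: "2 \<le> M"
  shows "- 3 * real M powr (1 - \<alpha>) * ((v 0)^2 + (v 1)^2) \<le> (\<Sum>j=1..M-1. l2_sum \<alpha> v j * v (j + 1))"
proof -
  define Q where "Q j = (\<Sum>s=0..j. l2c \<alpha> j (j - s) * ((v (j + 1) - v s)^2 - (v (j + 1) - v (s + 1))^2))" for j
  define P where "P = real M powr (1 - \<alpha>)"
  define W where "W = (v 0)^2 + (v 1)^2"
  have "(\<Sum>j=1..M-1. l2_sum \<alpha> v j * v (j + 1))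
      = (\<Sum>j=1..M-1. l2_sum \<alpha> (\<lambda>s. (v s)^2) j) / 2 + (\<Sum>j=1..M-1. Q j) / 2"
    unfolding Q_def l2_sum_mult_next by (simp add: sum.distrib sum_divide_distrib)
  moreover have "(\<Sum>j=1..M-1. head_gap * (v (j + 1) - v j)^2 - head_defect * (v (j + 1) - v (j - 1))^2)
      \<le> (\<Sum>j=1..M-1. Q j)"
    unfolding Q_def by (intro sum_mono l2_sum_remainder_ge) auto
  moreover note sum_l2_sum_remainder_ge[OF M, of v]
  moreover have "l2r \<alpha> 0 * (v M)^2 + l2r \<alpha> 1 * (v (M - 1))^2 - 3 * P * W
      \<le> (\<Sum>j=1..M-1. l2_sum \<alpha> (\<lambda>s. (v s)^2) j)"
    using sum_l2_sum_ge[OF M, of "\<lambda>s. (v s)^2"] by (simp add: P_def W_def)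
  moreover note head_quadratic_form_nonneg[of "v M" "v (M - 1)"]
  moreover have "2 * head_defect * (v 1 - v 0)^2 \<le> 2 * W"
  proof -
    have "head_defect * (v 1 - v 0)^2 \<le> 1/2 * (2 * (v 1)^2 + 2 * (v 0)^2)"
      using sum_sq_triangle_le[of "v 1" "- v 0"] four_head_defect_le_head_gap head_gap_le head_defect_nonneg
      by (intro mult_mono) auto
    then show ?thesis
      by (simp add: W_def)
  qed
  moreover have "2 * W \<le> 3 * P * W"
    unfolding P_def W_def using M order_lt_1 ge_one_powr_ge_zero[of "real M" "1 - \<alpha>"]
    by (intro mult_right_mono) auto
  ultimately show ?thesis
    unfolding P_def[symmetric] W_def[symmetric] by linarith
qed

end

section \<open>Discrete estimates in space\<close>

lemma discrete_Green_Dirichlet: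
  fixes Y :: "nat \<Rightarrow> real"
  assumes "1 \<le> N" "Y 0 = 0" "Y N = 0"
  shows "(\<Sum>i=1..N-1. ((Y (i + 1) - Y i) - (Y i - Y (i - 1))) * Y i) = - (\<Sum>i=1..N. (Y i - Y (i - 1))^2)"
proof -
  have "(\<Sum>i=1..n. ((Y (i + 1) - Y i) - (Y i - Y (i - 1))) * Y i)
      = (Y (n + 1) - Y n) * Y n - (\<Sum>i=1..n. (Y i - Y (i - 1))^2)" for n
    using assms(2) by (induction n) (simp_all add: power2_eq_square algebra_simps)
  from this[of "N - 1"] show ?thesis
    using assms by (cases N) (simp_all add: power2_eq_square)
qed

lemma sum_diff_sq_le:
  fixes d :: "nat \<Rightarrow> real"
  assumes "1 \<le> N"
  shows "(\<Sum>i=1..N-1. (d (i + 1) - d i)^2) \<le> 4 * (\<Sum>i=1..N. (d i)^2)"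
proof -
  have "(\<Sum>i=1..N-1. (d (i + 1) - d i)^2) \<le> (\<Sum>i=1..N-1. 2 * (d (i + 1))^2 + 2 * (d i)^2)"
    using sum_sq_triangle_le by (intro sum_mono) (metis diff_conv_add_uminus power2_minus)
  also have "\<dots> = 2 * (\<Sum>i=2..N. (d i)^2) + 2 * (\<Sum>i=1..N-1. (d i)^2)"
  proof -
    have "(\<Sum>i=1..N-1. (d (i + 1))^2) = (\<Sum>i=2..N. (d i)^2)"
      using sum.shift_bounds_cl_nat_ivl[of "\<lambda>i. (d i)^2" 1 1 "N - 1"] assms
      by (simp add: numeral_2_eq_2)
    then show ?thesis
      by (simp add: sum.distrib flip: sum_distrib_left)
  qed
  also have "\<dots> \<le> 4 * (\<Sum>i=1..N. (d i)^2)"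
    using sum_mono2[of "{1..N}" "{2..N}" "\<lambda>i. (d i)^2"] sum_mono2[of "{1..N}" "{1..N-1}" "\<lambda>i. (d i)^2"]
    by auto
  finally show ?thesis .
qed

lemma compact_average_sq_le: "((a + 10 * b + c) / 12)^2 \<le> ((a::real)^2 + 10 * b^2 + c^2) / 12"
proof -
  have "(a^2 + 10 * b^2 + c^2) / 12 - ((a + 10 * b + c) / 12)^2
      = (10 * (a - b)^2 + 10 * (b - c)^2 + (a - c)^2) / 144"
    by (simp add: power2_eq_square field_simps)
  moreover have "0 \<le> (10 * (a - b)^2 + 10 * (b - c)^2 + (a - c)^2) / 144"
    by simp
  ultimately show ?thesis
    by (metis diff_ge_0_iff_ge)
qed

lemma sum_compact_average_sq_le:
  fixes Y :: "nat \<Rightarrow> real"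
  assumes "2 \<le> N" "Y 0 = 0" "Y N = 0"
  shows "(\<Sum>i=1..N-1. ((Y (i + 1) + 10 * Y i + Y (i - 1)) / 12)^2) \<le> (\<Sum>i=1..N-1. (Y i)^2)"
proof -
  have "(\<Sum>i=1..N-1. ((Y (i + 1) + 10 * Y i + Y (i - 1)) / 12)^2)
      \<le> ((\<Sum>i=1..N-1. (Y (i + 1))^2) + 10 * (\<Sum>i=1..N-1. (Y i)^2) + (\<Sum>i=1..N-1. (Y (i - 1))^2)) / 12"
  proof -
    have "(\<Sum>i=1..N-1. ((Y (i + 1) + 10 * Y i + Y (i - 1)) / 12)^2)
        \<le> (\<Sum>i=1..N-1. ((Y (i + 1))^2 + 10 * (Y i)^2 + (Y (i - 1))^2) / 12)"
      by (intro sum_mono compact_average_sq_le)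
    then show ?thesis
      by (simp add: sum.distrib sum_distrib_left sum_divide_distrib add_divide_distrib)
  qed
  moreover have "(\<Sum>i=1..N-1. (Y (i + 1))^2) \<le> (\<Sum>i=1..N-1. (Y i)^2)"
  proof -
    have "(\<Sum>i=1..N-1. (Y (i + 1))^2) = (\<Sum>i=2..N. (Y i)^2)"
      using sum.shift_bounds_cl_nat_ivl[of "\<lambda>i. (Y i)^2" 1 1 "N - 1"] assms
      by (simp add: numeral_2_eq_2)
    also have "\<dots> = (\<Sum>i=2..N-1. (Y i)^2)"
      using assms by (cases N) auto
    also have "\<dots> \<le> (\<Sum>i=1..N-1. (Y i)^2)"
      by (intro sum_mono2) auto
    finally show ?thesis .
  qed
  moreover have "(\<Sum>i=1..N-1. (Y (i - 1))^2) \<le> (\<Sum>i=1..N-1. (Y i)^2)"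
  proof -
    have "(\<Sum>i=1..N-1. (Y (i - 1))^2) = (\<Sum>i=0..N-2. (Y i)^2)"
      using sum.shift_bounds_cl_nat_ivl[of "\<lambda>i. (Y (i - 1))^2" 0 1 "N - 2"] assms
      by (simp add: Suc_diff_Suc numeral_2_eq_2)
    also have "\<dots> = (\<Sum>i=1..N-2. (Y i)^2)"
      using assms by (simp add: sum.atLeast_Suc_atMost)
    also have "\<dots> \<le> (\<Sum>i=1..N-1. (Y i)^2)"
      by (intro sum_mono2) auto
    finally show ?thesis .
  qed
  ultimately show ?thesis
    by argo
qed

lemma discrete_Poincare:
  fixes Y :: "nat \<Rightarrow> real"
  assumes "Y 0 = 0"
  shows "(\<Sum>i=1..N-1. (Y i)^2) \<le> (real N)^2 * (\<Sum>i=1..N. (Y i - Y (i - 1))^2)"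
proof -
  define S where "S = (\<Sum>i=1..N. (Y i - Y (i - 1))^2)"
  have "(Y i)^2 \<le> real N * S" if "i \<le> N" for i
  proof -
    have "Y i = (\<Sum>k=1..i. Y k - Y (k - 1))"
      using assms by (induction i) auto
    then have "(Y i)^2 \<le> (\<Sum>k=1..i. (Y k - Y (k - 1))^2) * card {1..i}"
      using sum_squared_le_sum_of_squares[of "\<lambda>k. Y k - Y (k - 1)" "{1..i}"] by simp
    also have "\<dots> \<le> S * real N"
      unfolding S_def using that by (intro mult_mono sum_mono2) (auto intro: sum_nonneg)
    finally show ?thesis
      by (simp add: mult.commute)
  qed
  then have "(\<Sum>i=1..N-1. (Y i)^2) \<le> (\<Sum>i=1..N-1. real N * S)"
    by (intro sum_mono) auto
  also have "\<dots> = real (N - 1) * (real N * S)"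
    by simp
  also have "\<dots> \<le> (real N)^2 * S"
  proof -
    have "real (N - 1) * real N \<le> real N * real N"
      by (intro mult_right_mono) auto
    moreover have "0 \<le> S"
      unfolding S_def by (simp add: sum_nonneg)
    ultimately show ?thesis
      using mult_right_mono by (fastforce simp: power2_eq_square mult.assoc)
  qed
  finally show ?thesis
    by (simp add: S_def)
qed

lemma nrm0sq_nonneg: "0 \<le> h \<Longrightarrow> 0 \<le> nrm0sq h N v t"
  by (simp add: nrm0sq_def sum_nonneg)

lemma nrm0bsq_nonneg: "0 \<le> h \<Longrightarrow> 0 \<le> nrm0bsq h N v t"
  by (simp add: nrm0bsq_def sum_nonneg)

lemma nrm0bsq_dxb:
  assumes "0 < h"
  shows "nrm0bsq h N (dxb h y) t = (\<Sum>i=1..N. (y i t - y (i - 1) t)^2) / h"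
  using assms by (simp add: nrm0bsq_def dxb_def power_divide sum_divide_distrib power2_eq_square)

lemma Hh_eq_compact_average:
  assumes "0 < h"
  shows "Hh h y i t = (y (i + 1) t + 10 * y i t + y (i - 1) t) / 12"
  using assms by (simp add: Hh_def dxx_def field_simps)

lemma sum_dxx_mult_Hh_le:
  assumes h: "0 < h" and N: "2 \<le> N" and bc: "y 0 t = 0" "y N t = 0"
  shows "(\<Sum>i=1..N-1. dxx h y i t * Hh h y i t * h) \<le> -(2/3) * nrm0bsq h N (dxb h y) t"
proof -
  define Y where "Y i = y i t" for i
  define d where "d i = Y i - Y (i - 1)" for i
  define S where "S = (\<Sum>i=1..N. (d i)^2)"
  have "dxx h y i t * Hh h y i t * h = (d (i + 1) - d i) * Y i / h + (d (i + 1) - d i)^2 / (12 * h)"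
    if "1 \<le> i" for i
  proof -
    have dxx: "dxx h y i t = (d (i + 1) - d i) / h^2"
      using that by (simp add: dxx_def d_def Y_def algebra_simps)
    have Hh: "Hh h y i t = Y i + (d (i + 1) - d i) / 12"
      using h by (simp add: Hh_def dxx Y_def)
    show ?thesis
      unfolding dxx Hh using h by (simp add: field_simps power2_eq_square)
  qed
  then have "(\<Sum>i=1..N-1. dxx h y i t * Hh h y i t * h)
      = (\<Sum>i=1..N-1. (d (i + 1) - d i) * Y i) / h + (\<Sum>i=1..N-1. (d (i + 1) - d i)^2) / (12 * h)"
    by (simp add: sum.distrib sum_divide_distrib)
  also have "(\<Sum>i=1..N-1. (d (i + 1) - d i) * Y i) = - S"
    using discrete_Green_Dirichlet[of N Y] N bc by (simp add: S_def d_def Y_def)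
  also have "(\<Sum>i=1..N-1. (d (i + 1) - d i)^2) / (12 * h) \<le> 4 * S / (12 * h)"
    unfolding S_def using N h by (intro divide_right_mono sum_diff_sq_le) auto
  finally show ?thesis
    using h by (simp add: nrm0bsq_dxb S_def d_def Y_def field_simps)
qed

lemma nrm0sq_Hh_le:
  assumes h: "0 < h" and N: "2 \<le> N" and bc: "y 0 t = 0" "y N t = 0"
  shows "nrm0sq h N (Hh h y) t \<le> (real N * h)^2 * nrm0bsq h N (dxb h y) t"
proof -
  define S where "S = (\<Sum>i=1..N. (y i t - y (i - 1) t)^2)"
  have "nrm0sq h N (Hh h y) t = h * (\<Sum>i=1..N-1. ((y (i + 1) t + 10 * y i t + y (i - 1) t) / 12)^2)"
    using h by (simp add: nrm0sq_def Hh_eq_compact_average sum_distrib_left mult.commute)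
  also have "\<dots> \<le> h * (\<Sum>i=1..N-1. (y i t)^2)"
    using sum_compact_average_sq_le[of N "\<lambda>i. y i t"] N bc h by (intro mult_left_mono) auto
  also have "\<dots> \<le> h * ((real N)^2 * S)"
    using discrete_Poincare[of "\<lambda>i. y i t" N] bc h by (intro mult_left_mono) (auto simp: S_def)
  also have "\<dots> = (real N * h)^2 * nrm0bsq h N (dxb h y) t"
    using h by (simp add: nrm0bsq_dxb S_def field_simps power2_eq_square)
  finally show ?thesis .
qed

section \<open>Energy estimate and stability\<close>

lemma mult_le_weighted_squares:
  fixes a b \<delta> :: real
  assumes "0 < \<delta>"
  shows "a * b \<le> a^2 / (2 * \<delta>) + \<delta> * b^2 / 2"
proof -
  have "2 * \<delta> * (a * b) \<le> a^2 + \<delta>^2 * b^2"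
    using zero_le_power2[of "a - \<delta> * b"] by (simp add: power2_eq_square algebra_simps)
  then show ?thesis
    using assms by (simp add: field_simps power2_eq_square)
qed

lemma source_term_le:
  assumes h: "0 < h" and N: "2 \<le> N" and l: "real N * h = l" and c: "0 < c"
    and bc: "y 0 t = 0" "y N t = 0"
  shows "(\<Sum>i=1..N-1. Hh h \<phi> i t * Hh h y i t * h)
    \<le> c / 3 * nrm0bsq h N (dxb h y) t + 3 * l^2 / (4 * c) * nrm0sq h N (Hh h \<phi>) t"
proof -
  define \<delta> where "\<delta> = 2 * c / (3 * l^2)"
  have l0: "0 < l"
    unfolding l[symmetric] using h N by simp
  have \<delta>: "0 < \<delta>"
    using c l0 by (simp add: \<delta>_def)
  have "(\<Sum>i=1..N-1. Hh h \<phi> i t * Hh h y i t * h)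
      \<le> (\<Sum>i=1..N-1. ((Hh h \<phi> i t)^2 / (2 * \<delta>) + \<delta> * (Hh h y i t)^2 / 2) * h)"
    using h mult_le_weighted_squares[OF \<delta>] by (intro sum_mono mult_right_mono) auto
  also have "\<dots> = nrm0sq h N (Hh h \<phi>) t / (2 * \<delta>) + \<delta> / 2 * nrm0sq h N (Hh h y) t"
    by (simp add: nrm0sq_def sum.distrib sum_divide_distrib sum_distrib_left algebra_simps)
  also have "\<dots> \<le> nrm0sq h N (Hh h \<phi>) t / (2 * \<delta>) + \<delta> / 2 * (l^2 * nrm0bsq h N (dxb h y) t)"
    using nrm0sq_Hh_le[of h N y t] h N bc \<delta> by (simp add: l)
  also have "\<dots> = c / 3 * nrm0bsq h N (dxb h y) t + 3 * l^2 / (4 * c) * nrm0sq h N (Hh h \<phi>) t"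
    using l0 c by (simp add: \<delta>_def field_simps)
  finally show ?thesis .
qed

lemma energy_level_le:
  assumes h: "0 < h" and N: "2 \<le> N" and l: "real N * h = l" and c: "0 < c" "c \<le> a" and d: "0 \<le> d"
    and eq: "\<And>i. 1 \<le> i \<Longrightarrow> i \<le> N - 1 \<Longrightarrow> L i = a * dxx h y i t - d * Hh h y i t + Hh h \<phi> i t"
    and bc: "y 0 t = 0" "y N t = 0"
  shows "(\<Sum>i=1..N-1. L i * Hh h y i t * h)
    \<le> -(c / 3) * nrm0bsq h N (dxb h y) t + 3 * l^2 / (4 * c) * nrm0sq h N (Hh h \<phi>) t"
proof -
  define Z where "Z = nrm0bsq h N (dxb h y) t"
  define A where "A = (\<Sum>i=1..N-1. dxx h y i t * Hh h y i t * h)"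
  have Z: "0 \<le> Z"
    using h by (simp add: Z_def nrm0bsq_nonneg)
  have "(\<Sum>i=1..N-1. L i * Hh h y i t * h)
      = a * A - d * nrm0sq h N (Hh h y) t + (\<Sum>i=1..N-1. Hh h \<phi> i t * Hh h y i t * h)"
  proof -
    have "(\<Sum>i=1..N-1. L i * Hh h y i t * h) = (\<Sum>i=1..N-1. a * (dxx h y i t * Hh h y i t * h)
        - d * ((Hh h y i t)^2 * h) + Hh h \<phi> i t * Hh h y i t * h)"
      by (intro sum.cong refl) (auto simp: eq power2_eq_square algebra_simps)
    then show ?thesis
      by (simp add: A_def nrm0sq_def sum.distrib sum_subtractf sum_distrib_left)
  qed
  moreover have "a * A \<le> c * (-(2/3) * Z)"
  proof -
    have A: "A \<le> -(2/3) * Z"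
      unfolding A_def Z_def using h N bc by (rule sum_dxx_mult_Hh_le)
    then have "a * A \<le> c * A"
      using c Z by (intro mult_right_mono_neg) auto
    also have "\<dots> \<le> c * (-(2/3) * Z)"
      using A c by (intro mult_left_mono) auto
    finally show ?thesis .
  qed
  moreover have "0 \<le> d * nrm0sq h N (Hh h y) t"
    using d h by (simp add: nrm0sq_nonneg)
  moreover have "(\<Sum>i=1..N-1. Hh h \<phi> i t * Hh h y i t * h)
      \<le> c / 3 * Z + 3 * l^2 / (4 * c) * nrm0sq h N (Hh h \<phi>) t"
    unfolding Z_def using h N l c(1) bc by (rule source_term_le)
  ultimately show ?thesis
    unfolding Z_def by (simp add: algebra_simps)
qed

context caputo_order
begin

lemma sum_L2op_mult_ge:
  fixes v :: "nat \<Rightarrow> nat \<Rightarrow> real"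
  assumes M: "2 \<le> M" and \<tau>: "0 < \<tau>" "real M * \<tau> = T" and h: "0 < h"
  shows "- 3 * T powr (1 - \<alpha>) / Gamma (2 - \<alpha>) * (nrm0sq h N v 0 + nrm0sq h N v 1)
    \<le> (\<Sum>j=1..M-1. \<tau> * (\<Sum>i=1..N-1. L2op \<alpha> \<tau> v i j * v i (j + 1) * h))"
proof -
  define K where "K = \<tau> * (\<tau> powr (-\<alpha>) / Gamma (2 - \<alpha>)) * h"
  define P where "P = real M powr (1 - \<alpha>)"
  have K: "0 \<le> K"
    using \<tau> h order_lt_1 by (simp add: K_def Gamma_real_pos)
  have "(\<Sum>j=1..M-1. \<tau> * (\<Sum>i=1..N-1. L2op \<alpha> \<tau> v i j * v i (j + 1) * h))
      = K * (\<Sum>i=1..N-1. \<Sum>j=1..M-1. l2_sum \<alpha> (\<lambda>s. v i s) j * v i (j + 1))"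
    unfolding L2op_eq_l2_sum K_def
    by (subst sum.swap) (simp add: sum_distrib_left mult_ac)
  moreover have "(\<Sum>i=1..N-1. - 3 * P * ((v i 0)^2 + (v i 1)^2))
      \<le> (\<Sum>i=1..N-1. \<Sum>j=1..M-1. l2_sum \<alpha> (\<lambda>s. v i s) j * v i (j + 1))"
    unfolding P_def using M by (intro sum_mono sum_l2_sum_mult_next_ge)
  moreover have "K * (\<Sum>i=1..N-1. - 3 * P * ((v i 0)^2 + (v i 1)^2))
      = - 3 * (\<tau> powr (1 - \<alpha>) * P) / Gamma (2 - \<alpha>) * (nrm0sq h N v 0 + nrm0sq h N v 1)"
  proof -
    have "nrm0sq h N v 0 + nrm0sq h N v 1 = h * (\<Sum>i=1..N-1. (v i 0)^2 + (v i 1)^2)"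
      by (simp add: nrm0sq_def sum.distrib sum_distrib_left mult.commute distrib_left)
    moreover have "\<tau> powr (1 - \<alpha>) = \<tau> * \<tau> powr (-\<alpha>)"
      using \<tau> by (simp add: powr_add[of \<tau> 1 "-\<alpha>", simplified])
    moreover have "(\<Sum>i=1..N-1. - 3 * P * ((v i 0)^2 + (v i 1)^2))
        = - 3 * P * (\<Sum>i=1..N-1. (v i 0)^2 + (v i 1)^2)"
      by (rule sum_distrib_left[symmetric])
    ultimately show ?thesis
      by (simp add: K_def mult_ac)
  qed
  moreover have "\<tau> powr (1 - \<alpha>) * P = T powr (1 - \<alpha>)"
    using \<tau> by (simp add: P_def powr_mult[symmetric] mult.commute)
  ultimately show ?thesis
    using mult_left_mono[OF _ K] by fastforce
qed

end

definition stability_const :: "real \<Rightarrow> real \<Rightarrow> real \<Rightarrow> real \<Rightarrow> real" where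
  "stability_const \<alpha> l T c1 =
     (1 + l^2) * (3 / c1) * (3 * T powr (1 - \<alpha>) / Gamma (2 - \<alpha>) + 3 * l^2 / (4 * c1))"

locale compact_scheme = caputo_order +
  fixes l T c1 :: real and k q :: "real \<Rightarrow> real" and N M :: nat and h \<tau> :: real
    and y \<phi> :: "nat \<Rightarrow> nat \<Rightarrow> real"
  assumes length_pos: "0 < l" and final_time_pos: "0 < T" and c1_pos: "0 < c1"
    and k_ge: "\<And>t. 0 \<le> t \<Longrightarrow> t \<le> T \<Longrightarrow> c1 \<le> k t"
    and q_nonneg: "\<And>t. 0 \<le> t \<Longrightarrow> t \<le> T \<Longrightarrow> 0 \<le> q t"
    and N_ge: "2 \<le> N" and M_ge: "2 \<le> M" and mesh_width: "h = l / real N" and time_step: "\<tau> = T / real M"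
    and scheme: "\<And>i j. 1 \<le> i \<Longrightarrow> i \<le> N - 1 \<Longrightarrow> 1 \<le> j \<Longrightarrow> j \<le> M - 1 \<Longrightarrow>
      L2op \<alpha> \<tau> (Hh h y) i j
        = k (real (j + 1) * \<tau>) * dxx h y i (j + 1) - q (real (j + 1) * \<tau>) * Hh h y i (j + 1)
          + Hh h \<phi> i (j + 1)"
    and boundary: "\<And>j. j \<le> M \<Longrightarrow> y 0 j = 0 \<and> y N j = 0"
begin

lemma h_pos: "0 < h" and N_mult_h: "real N * h = l" and tau_pos: "0 < \<tau>" and M_mult_tau: "real M * \<tau> = T"
  using N_ge M_ge length_pos final_time_pos by (simp_all add: mesh_width time_step)

lemma energy_level_L2op_le:
  assumes j: "j \<in> {1..M-1}"
  shows "(\<Sum>i=1..N-1. L2op \<alpha> \<tau> (Hh h y) i j * Hh h y i (j + 1) * h)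
    \<le> -(c1/3) * nrm0bsq h N (dxb h y) (j + 1) + 3 * l^2 / (4 * c1) * nrm0sq h N (Hh h \<phi>) (j + 1)"
proof -
  have "real (j + 1) * \<tau> \<le> real M * \<tau>"
    using j tau_pos by (intro mult_right_mono) auto
  then have "0 \<le> real (j + 1) * \<tau>" "real (j + 1) * \<tau> \<le> T"
    using tau_pos M_mult_tau by simp_all
  moreover have "y 0 (j + 1) = 0" "y N (j + 1) = 0"
    using boundary[of "j + 1"] j M_ge by auto
  ultimately show ?thesis
    using j h_pos N_ge N_mult_h c1_pos k_ge q_nonneg scheme
    by (intro energy_level_le[where a = "k (real (j + 1) * \<tau>)" and d = "q (real (j + 1) * \<tau>)"]) auto
qed

lemma dissipation_le:
  "c1 / 3 * (\<Sum>j=1..M-1. nrm0bsq h N (dxb h y) (j + 1) * \<tau>)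
    \<le> 3 * T powr (1 - \<alpha>) / Gamma (2 - \<alpha>) * (nrm0sq h N (Hh h y) 0 + nrm0sq h N (Hh h y) 1)
      + 3 * l^2 / (4 * c1) * (\<Sum>j=1..M-1. nrm0sq h N (Hh h \<phi>) (j + 1) * \<tau>)"
proof -
  define Z F where "Z j = nrm0bsq h N (dxb h y) (j + 1)" and "F j = nrm0sq h N (Hh h \<phi>) (j + 1)" for j
  define K where "K = 3 * l^2 / (4 * c1)"
  have "- 3 * T powr (1 - \<alpha>) / Gamma (2 - \<alpha>) * (nrm0sq h N (Hh h y) 0 + nrm0sq h N (Hh h y) 1)
      \<le> (\<Sum>j=1..M-1. \<tau> * (\<Sum>i=1..N-1. L2op \<alpha> \<tau> (Hh h y) i j * Hh h y i (j + 1) * h))"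
    using M_ge tau_pos M_mult_tau h_pos by (rule sum_L2op_mult_ge)
  also have "\<dots> \<le> (\<Sum>j=1..M-1. \<tau> * (-(c1/3) * Z j + K * F j))"
    using energy_level_L2op_le tau_pos unfolding Z_def F_def K_def by (intro sum_mono mult_left_mono) auto
  also have "\<dots> = (\<Sum>j=1..M-1. -(c1/3) * (Z j * \<tau>) + K * (F j * \<tau>))"
    by (intro sum.cong refl) (simp add: algebra_simps)
  also have "\<dots> = -(c1/3) * (\<Sum>j=1..M-1. Z j * \<tau>) + K * (\<Sum>j=1..M-1. F j * \<tau>)"
    by (simp only: sum.distrib sum_distrib_left)
  finally show ?thesis
    by (simp add: Z_def F_def K_def)
qed

lemma stability_estimate:
  "(\<Sum>j = 1..M - 1. (nrm0sq h N (Hh h y) (j + 1) + nrm0bsq h N (dxb h y) (j + 1)) * \<tau>)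
    \<le> stability_const \<alpha> l T c1 * (nrm0sq h N (Hh h y) 1 + nrm0sq h N (Hh h y) 0
         + (\<Sum>j = 1..M - 1. nrm0sq h N (Hh h \<phi>) (j + 1) * \<tau>))"
proof -
  define Z where "Z j = nrm0bsq h N (dxb h y) (j + 1)" for j
  define X SZ SF where "X = nrm0sq h N (Hh h y) 0 + nrm0sq h N (Hh h y) 1"
    and "SZ = (\<Sum>j=1..M-1. Z j * \<tau>)" and "SF = (\<Sum>j=1..M-1. nrm0sq h N (Hh h \<phi>) (j + 1) * \<tau>)"
  define A K where "A = 3 * T powr (1 - \<alpha>) / Gamma (2 - \<alpha>)" and "K = 3 * l^2 / (4 * c1)"
  have "(\<Sum>j = 1..M - 1. (nrm0sq h N (Hh h y) (j + 1) + Z j) * \<tau>) \<le> (\<Sum>j = 1..M - 1. (1 + l^2) * (Z j * \<tau>))"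
  proof (intro sum_mono)
    fix j
    assume "j \<in> {1..M-1}"
    then have "y 0 (j + 1) = 0" "y N (j + 1) = 0"
      using boundary[of "j + 1"] M_ge by auto
    then have "nrm0sq h N (Hh h y) (j + 1) \<le> l^2 * Z j"
      using nrm0sq_Hh_le[OF h_pos N_ge] by (simp add: Z_def N_mult_h)
    then show "(nrm0sq h N (Hh h y) (j + 1) + Z j) * \<tau> \<le> (1 + l^2) * (Z j * \<tau>)"
      using tau_pos by (simp add: algebra_simps)
  qed
  also have "\<dots> = (1 + l^2) * SZ"
    by (simp add: SZ_def sum_distrib_left)
  also have "\<dots> \<le> (1 + l^2) * (3 / c1 * ((A + K) * (X + SF)))"
  proof -
    have "0 \<le> A" "0 \<le> K" "0 \<le> X" "0 \<le> SF"
      using c1_pos tau_pos h_pos order_lt_1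
      by (auto simp: A_def K_def X_def SF_def nrm0sq_nonneg Gamma_real_pos intro!: sum_nonneg)
    then have "A * X + K * SF \<le> (A + K) * (X + SF)"
      by (simp add: algebra_simps)
    then have "3 / c1 * (A * X + K * SF) \<le> 3 / c1 * ((A + K) * (X + SF))"
      using c1_pos by (intro mult_left_mono) auto
    moreover have "SZ \<le> 3 / c1 * (A * X + K * SF)"
      using dissipation_le c1_pos by (simp add: SZ_def Z_def A_def X_def K_def SF_def field_simps)
    ultimately have "SZ \<le> 3 / c1 * ((A + K) * (X + SF))"
      by (rule order_trans[rotated])
    then show ?thesis
      by (intro mult_left_mono) auto
  qed
  also have "\<dots> = stability_const \<alpha> l T c1 * (X + SF)"
    by (simp only: stability_const_def A_def K_def mult.assoc)
  finally show ?thesis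
    by (simp add: Z_def X_def SF_def add_ac)
qed

end

theorem theorem2:
  fixes \<alpha> l T c1 :: real and k q :: "real \<Rightarrow> real"
  assumes "0 < \<alpha>" "\<alpha> < 1" "0 < l" "0 < T" "0 < c1"
    and "\<And>t. 0 \<le> t \<Longrightarrow> t \<le> T \<Longrightarrow> k t \<ge> c1"
    and "\<And>t. 0 \<le> t \<Longrightarrow> t \<le> T \<Longrightarrow> q t \<ge> 0"
  shows "\<exists>M2 > 0. \<forall>(N::nat) (M::nat) (\<phi>::nat \<Rightarrow> nat \<Rightarrow> real) (u0::real \<Rightarrow> real)
                    (y::nat \<Rightarrow> nat \<Rightarrow> real).
    let h = l / real N; \<tau> = T / real M in
    (2 \<le> N \<and> 2 \<le> M
     \<and> (\<forall>i j. 1 \<le> i \<and> i \<le> N - 1 \<and> 1 \<le> j \<and> j \<le> M - 1 \<longrightarrow>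
          L2op \<alpha> \<tau> (Hh h y) i j
            = k (real (j + 1) * \<tau>) * dxx h y i (j + 1)
              - q (real (j + 1) * \<tau>) * Hh h y i (j + 1) + Hh h \<phi> i (j + 1))
     \<and> (\<forall>j \<le> M. y 0 j = 0 \<and> y N j = 0)
     \<and> (\<forall>i \<le> N. y i 0 = u0 (real i * h)))
    \<longrightarrow>
    (\<Sum>j = 1..M - 1. (nrm0sq h N (Hh h y) (j + 1) + nrm0bsq h N (dxb h y) (j + 1)) * \<tau>)
      \<le> M2 * (nrm0sq h N (Hh h y) 1 + nrm0sq h N (Hh h y) 0
               + (\<Sum>j = 1..M - 1. nrm0sq h N (Hh h \<phi>) (j + 1) * \<tau>))"
proof -
  interpret caputo_order \<alpha>
    using assms(1,2) by unfold_locales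
  show ?thesis
    unfolding Let_def
  proof (intro exI[of _ "stability_const \<alpha> l T c1"] conjI allI impI)
    show "0 < stability_const \<alpha> l T c1"
      using assms(2-5) by (simp add: stability_const_def Gamma_real_pos pos_add_strict)
  qed (elim conjE, rule compact_scheme.stability_estimate, unfold_locales, use assms in auto)
qed

end
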